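(* Let $(G,t)$ be a non-trivial problem instance, $X$ a modulator of $G$, $C$ a connected component of $G-X$, $T$ the block-cut tree of $C$, and let $\langle a_1,B_1,a_2,B_2,a_3,B_3,a_4\rangle$ be a simple path in $T$ (with $a_i$ articulation vertices and $B_i$ blocks) such that $N_G\big((V(B_1)\cup V(B_2)\cup V(B_3))\setminus\{a_1,a_4\}\big)=\{a_1,a_4\}$. Let $G'$ be obtained from $G$ by contracting $B_1$ into $a_1$ (replacing $V(B_1)$ by the single vertex $a_1$ adjacent to all of $N_G(V(B_1))$). Then $(G,t)$ has a solution if and only if $(G',t)$ has a solution.
   Context: $\mathrm{tw}$ is treewidth. A solution for $(G,t)$ is $S\subseteq V(G)$ with $|S|\le t$ and $\mathrm{tw}(G-S)\le 2$. A modulator of $G$ is $X$ with $\mathrm{tw}(G-X)\le 2$. $(G,t)$ is trivial if $|V(G)|\le 4$, or $\mathrm{tw}(G)\le 2$, or $t=0$, or some connected subgraph $H$ satisfies $\mathrm{tw}\big(G[N_G[H]]\cup\binom{N_G(H)}{2}\big)\le 2$ ($N_G(H)$: vertices outside $H$ adjacent to $H$; $N_G[H]=V(H)\cup N_G(H)$; $\cup\binom{N_G(H)}{2}$ adds all edges among $N_G(H)$); otherwise non-trivial. For $U\subseteq V(G)$, $N_G(U)$ is the set of vertices outside $U$ adjacent to $U$. A block of a connected graph is a maximal biconnected subgraph (biconnected = connected without articulation vertex); the block-cut tree of a connected graph $C$ is the bipartite tree whose nodes are the articulation vertices of $C$ and the blocks of $C$, with articulation vertex $a$ adjacent to block $B$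 iff $a\in V(B)$. *)

theory Defs
  imports Main
begin

type_synonym 'a graph = "'a set \<times> 'a set set"

definition verts :: "'a graph \<Rightarrow> 'a set" where "verts G = fst G"
definition edges :: "'a graph \<Rightarrow> 'a set set" where "edges G = snd G"

definition wf_graph :: "'a graph \<Rightarrow> bool" where
  "wf_graph G \<longleftrightarrow> finite (verts G) \<and>
     (\<forall>e\<in>edges G. \<exists>u v. u \<noteq> v \<and> e = {u, v} \<and> u \<in> verts G \<and> v \<in> verts G)"

definition subgraph :: "'a graph \<Rightarrow> 'a graph \<Rightarrow> bool" where
  "subgraph H G \<longleftrightarrow> wf_graph H \<and> verts H \<subseteq> verts G \<and> edges H \<subseteq> edges G"

definition induced :: "'a graph \<Rightarrow> 'a set \<Rightarrow> 'a graph" where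
  "induced G U = (verts G \<inter> U, {e \<in> edges G. e \<subseteq> U})"

definition del_verts :: "'a graph \<Rightarrow> 'a set \<Rightarrow> 'a graph" where
  "del_verts G S = induced G (verts G - S)"

definition reach :: "'a graph \<Rightarrow> 'a \<Rightarrow> 'a \<Rightarrow> bool" where
  "reach G u v \<longleftrightarrow> u \<in> verts G \<and> v \<in> verts G \<and>
     (u, v) \<in> {(x, y). {x, y} \<in> edges G}\<^sup>*"

definition connected_graph :: "'a graph \<Rightarrow> bool" where
  "connected_graph G \<longleftrightarrow> verts G \<noteq> {} \<and> (\<forall>u\<in>verts G. \<forall>v\<in>verts G. reach G u v)"

definition components :: "'a graph \<Rightarrow> 'a set set" where
  "components G = {{v. reach G u v} | u. u \<in> verts G}"

definition nbhd :: "'a graph \<Rightarrow> 'a set \<Rightarrow> 'a set" where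
  "nbhd G U = {v \<in> verts G. v \<notin> U \<and> (\<exists>u\<in>U. {u, v} \<in> edges G)}"

definition articulation :: "'a graph \<Rightarrow> 'a \<Rightarrow> bool" where
  "articulation G v \<longleftrightarrow> v \<in> verts G \<and>
     card (components (del_verts G {v})) > card (components G)"

definition biconnected :: "'a graph \<Rightarrow> bool" where
  "biconnected G \<longleftrightarrow> connected_graph G \<and> (\<forall>v. \<not> articulation G v)"

definition is_block :: "'a graph \<Rightarrow> 'a graph \<Rightarrow> bool" where
  "is_block C B \<longleftrightarrow> subgraph B C \<and> biconnected B \<and>
     (\<forall>B'. subgraph B B' \<and> subgraph B' C \<and> biconnected B' \<longrightarrow> B' = B)"

text \<open>Adjacency in the block-cut tree of C (articulation vertex a, block B).\<close>
definition bc_adj :: "'a graph \<Rightarrow> 'a \<Rightarrow> 'a graph \<Rightarrow> bool" where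
  "bc_adj C a B \<longleftrightarrow> articulation C a \<and> is_block C B \<and> a \<in> verts B"

definition is_tree :: "nat graph \<Rightarrow> bool" where
  "is_tree T \<longleftrightarrow> wf_graph T \<and> connected_graph T \<and> card (edges T) + 1 = card (verts T)"

definition tree_decomp :: "'a graph \<Rightarrow> nat graph \<Rightarrow> (nat \<Rightarrow> 'a set) \<Rightarrow> bool" where
  "tree_decomp G T bag \<longleftrightarrow> is_tree T \<and>
     (\<forall>i\<in>verts T. bag i \<subseteq> verts G) \<and>
     (\<forall>v\<in>verts G. \<exists>i\<in>verts T. v \<in> bag i) \<and>
     (\<forall>e\<in>edges G. \<exists>i\<in>verts T. e \<subseteq> bag i) \<and>
     (\<forall>v\<in>verts G. connected_graph (induced T {i \<in> verts T. v \<in> bag i}))"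

definition has_tw_le :: "'a graph \<Rightarrow> nat \<Rightarrow> bool" where
  "has_tw_le G k \<longleftrightarrow> (\<exists>T bag. tree_decomp G T bag \<and> (\<forall>i\<in>verts T. card (bag i) \<le> k + 1))"

definition tw :: "'a graph \<Rightarrow> nat" where
  "tw G = (LEAST k. has_tw_le G k)"

definition is_solution :: "'a graph \<Rightarrow> nat \<Rightarrow> 'a set \<Rightarrow> bool" where
  "is_solution G t S \<longleftrightarrow> S \<subseteq> verts G \<and> card S \<le> t \<and> tw (del_verts G S) \<le> 2"

definition modulator :: "'a graph \<Rightarrow> 'a set \<Rightarrow> bool" where
  "modulator G X \<longleftrightarrow> tw (del_verts G X) \<le> 2"

definition torso_nbhd :: "'a graph \<Rightarrow> 'a set \<Rightarrow> 'a graph" where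
  "torso_nbhd G U = (let N = nbhd G U in
     (verts (induced G (U \<union> N)),
      edges (induced G (U \<union> N)) \<union> {{u, v} | u v. u \<in> N \<and> v \<in> N \<and> u \<noteq> v}))"

definition trivial_instance :: "'a graph \<Rightarrow> nat \<Rightarrow> bool" where
  "trivial_instance G t \<longleftrightarrow> card (verts G) \<le> 4 \<or> tw G \<le> 2 \<or> t = 0 \<or>
     (\<exists>H. subgraph H G \<and> connected_graph H \<and> tw (torso_nbhd G (verts H)) \<le> 2)"

definition contract_into :: "'a graph \<Rightarrow> 'a set \<Rightarrow> 'a \<Rightarrow> 'a graph" where
  "contract_into G W a =
     ((verts G - W) \<union> {a},
      {e \<in> edges G. e \<inter> W = {}} \<union> {{a, w} | w. w \<in> nbhd G W})"

end

theory Submission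
  imports Defs
begin

text \<open>
  Let \<open>U\<close> be the interior of the chain \<open>B1, B2, B3\<close> (its vertices other than \<open>a1, a4\<close>), so that
  \<open>{a1, a4}\<close> separates \<open>U\<close> from the rest of \<open>G\<close>, and let \<open>U23\<close> be the interior of \<open>B2 \<union> B3\<close>,
  attached at \<open>a2\<close> and \<open>a4\<close>. Non-triviality says that the torso of \<open>U23\<close>, i.e.
  \<open>G[U23 \<union> {a2, a4}]\<close> plus the edge \<open>a2 a4\<close>, has treewidth at least 3; since \<open>X\<close> is a
  modulator, every subgraph of the component \<open>K\<close> has treewidth at most 2.

  A solution \<open>S\<close> of \<open>G\<close> that meets \<open>B1\<close> can be replaced by \<open>(S - V(B1)) \<union> {a1}\<close>; one that avoids
  \<open>B1\<close> stays a solution, because \<open>G' - S\<close> is a contraction of \<open>G - S\<close> along the connected set \<open>V(B1)\<close>.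

  Conversely, let \<open>S'\<close> solve \<open>G'\<close>. If \<open>S'\<close> meets \<open>U \<union> {a1}\<close>, or contains \<open>a4\<close>, then moving this
  part of \<open>S'\<close> to \<open>a1\<close> (resp. \<open>a4\<close>) gives a solution of \<open>G\<close>: the remaining graph is glued at a single
  vertex from a subgraph of \<open>G' - S'\<close> and a subgraph of \<open>K\<close>. Otherwise, if \<open>S'\<close> separates \<open>a1\<close> from
  \<open>a4\<close> outside \<open>U\<close>, then \<open>S'\<close> itself solves \<open>G\<close>, the graph \<open>G - S'\<close> being glued from three such pieces
  at \<open>a1\<close> and \<open>a4\<close>; and if it does not, contracting the \<open>a1\<close>-side of an \<open>a1\<close>-\<open>a4\<close> path into \<open>a2\<close>
  exhibits the torso of \<open>U23\<close> as a minor of \<open>G' - S'\<close>, which is impossible.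
\<close>

lemma verts_induced [simp]: "verts (induced G U) = verts G \<inter> U"
  by (simp add: induced_def verts_def)

lemma edges_induced [simp]: "edges (induced G U) = {e \<in> edges G. e \<subseteq> U}"
  by (simp add: induced_def edges_def)

lemma verts_pair [simp]: "verts (V, E) = V"
  by (simp add: verts_def)

lemma edges_pair [simp]: "edges (V, E) = E"
  by (simp add: edges_def)

lemma verts_del_verts [simp]: "verts (del_verts G S) = verts G - S"
  by (auto simp: del_verts_def)

lemma edges_del_verts [simp]: "edges (del_verts G S) = {e \<in> edges G. e \<subseteq> verts G - S}"
  by (auto simp: del_verts_def)

lemma verts_contract_into [simp]: "verts (contract_into G W z) = (verts G - W) \<union> {z}"
  by (simp add: contract_into_def)

lemma edges_contract_into [simp]:
  "edges (contract_into G W z) = {e \<in> edges G. e \<inter> W = {}} \<union> {{z, w} | w. w \<in> nbhd G W}"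
  by (simp add: contract_into_def)

definition union_graph :: "'a graph \<Rightarrow> 'a graph \<Rightarrow> 'a graph" where
  "union_graph A B = (verts A \<union> verts B, edges A \<union> edges B)"

lemma verts_union_graph [simp]: "verts (union_graph A B) = verts A \<union> verts B"
  by (simp add: union_graph_def)

lemma edges_union_graph [simp]: "edges (union_graph A B) = edges A \<union> edges B"
  by (simp add: union_graph_def)

lemma wf_graphD:
  "wf_graph G \<Longrightarrow> e \<in> edges G \<Longrightarrow> \<exists>u v. u \<noteq> v \<and> e = {u, v} \<and> u \<in> verts G \<and> v \<in> verts G"
  by (auto simp: wf_graph_def)

lemma wf_graph_edge:
  assumes "wf_graph G" "{x, y} \<in> edges G"
  shows "x \<noteq> y \<and> x \<in> verts G \<and> y \<in> verts G"
  using wf_graphD[OF assms] by (auto simp: doubleton_eq_iff)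

lemma wf_graph_edge_subset: "wf_graph G \<Longrightarrow> e \<in> edges G \<Longrightarrow> e \<subseteq> verts G"
  by (auto simp: wf_graph_def)

lemma wf_graph_finite: "wf_graph G \<Longrightarrow> finite (verts G)"
  by (simp add: wf_graph_def)

lemma wf_graph_finite_edges: "wf_graph G \<Longrightarrow> finite (edges G)"
  by (metis Pow_iff finite_Pow_iff finite_subset subsetI wf_graph_edge_subset wf_graph_finite)

lemma wf_graph_induced:
  assumes "wf_graph G" shows "wf_graph (induced G U)"
  unfolding wf_graph_def
proof (intro conjI ballI)
  show "finite (verts (induced G U))" using wf_graph_finite[OF assms] by simp
  fix e assume "e \<in> edges (induced G U)"
  then show "\<exists>u v. u \<noteq> v \<and> e = {u, v} \<and> u \<in> verts (induced G U) \<and> v \<in> verts (induced G U)"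
    using wf_graphD[OF assms, of e] by auto
qed

lemma wf_graph_del_verts: "wf_graph G \<Longrightarrow> wf_graph (del_verts G S)"
  unfolding del_verts_def by (rule wf_graph_induced)

lemma wf_graph_union:
  assumes "wf_graph A" "wf_graph B" shows "wf_graph (union_graph A B)"
  unfolding wf_graph_def
proof (intro conjI ballI)
  show "finite (verts (union_graph A B))" using assms by (simp add: wf_graph_finite)
  fix e assume "e \<in> edges (union_graph A B)"
  then show "\<exists>u v. u \<noteq> v \<and> e = {u, v} \<and> u \<in> verts (union_graph A B) \<and> v \<in> verts (union_graph A B)"
    using wf_graphD[OF assms(1), of e] wf_graphD[OF assms(2), of e] by auto
qed

lemma wf_graph_add_edge:
  assumes "wf_graph A" "x \<noteq> u" "u \<in> verts A"
  shows "wf_graph (verts A \<union> {x}, edges A \<union> {{x, u}})"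
proof -
  have "wf_graph ({x, u}, {{x, u}})" using assms(2) by (auto simp: wf_graph_def)
  then have "wf_graph (union_graph A ({x, u}, {{x, u}}))" using assms(1) by (rule wf_graph_union[rotated])
  then show ?thesis using assms(3) by (simp add: union_graph_def insert_absorb)
qed

lemma wf_graph_contract_into:
  assumes "wf_graph G" "a \<in> W"
  shows "wf_graph (contract_into G W a)"
  unfolding wf_graph_def
proof (intro conjI ballI)
  show "finite (verts (contract_into G W a))" using wf_graph_finite[OF assms(1)] by simp
  fix e assume "e \<in> edges (contract_into G W a)"
  then consider "e \<in> edges G" "e \<inter> W = {}" | w where "e = {a, w}" "w \<in> nbhd G W" by auto
  then show "\<exists>u v. u \<noteq> v \<and> e = {u, v} \<and> u \<in> verts (contract_into G W a) \<and> v \<in> verts (contract_into G W a)"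
  proof cases
    case 1 then show ?thesis using wf_graphD[OF assms(1), of e] by auto
  next
    case 2 then show ?thesis using assms(2) by (intro exI[of _ a] exI[of _ w]) (auto simp: nbhd_def)
  qed
qed

section \<open>Reachability and connectivity\<close>

definition adj_rel :: "'a graph \<Rightarrow> ('a \<times> 'a) set" where
  "adj_rel G = {(x, y). {x, y} \<in> edges G}"

lemma reach_iff_adj_rel:
  "reach G u v \<longleftrightarrow> u \<in> verts G \<and> v \<in> verts G \<and> (u, v) \<in> (adj_rel G)\<^sup>*"
  by (simp add: reach_def adj_rel_def)

lemma converse_adj_rel: "(adj_rel G)\<inverse> = adj_rel G"
  by (auto simp: adj_rel_def insert_commute)

lemma reach_refl: "v \<in> verts G \<Longrightarrow> reach G v v"
  by (simp add: reach_iff_adj_rel)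

lemma reach_edge: "{u, v} \<in> edges G \<Longrightarrow> u \<in> verts G \<Longrightarrow> v \<in> verts G \<Longrightarrow> reach G u v"
  by (auto simp: reach_iff_adj_rel adj_rel_def)

lemma reach_trans: "reach G u v \<Longrightarrow> reach G v w \<Longrightarrow> reach G u w"
  by (auto simp: reach_iff_adj_rel)

lemma reach_sym: "reach G u v \<Longrightarrow> reach G v u"
  by (metis converse_adj_rel reach_iff_adj_rel rtrancl_converseI)

lemma reach_verts: "reach G u v \<Longrightarrow> u \<in> verts G \<and> v \<in> verts G"
  by (simp add: reach_iff_adj_rel)

lemma reach_hom:
  assumes hom: "\<And>x y. {x, y} \<in> edges A \<Longrightarrow> {f x, f y} \<in> edges B"
    and r: "reach A u v" and "f u \<in> verts B" "f v \<in> verts B"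
  shows "reach B (f u) (f v)"
proof -
  have "(u, v) \<in> (adj_rel A)\<^sup>*" using r by (simp add: reach_iff_adj_rel)
  then have "(f u, f v) \<in> (adj_rel B)\<^sup>*"
  proof (induction rule: rtrancl_induct)
    case (step y z)
    then have "(f y, f z) \<in> adj_rel B" using hom by (auto simp: adj_rel_def)
    with step.IH show ?case by (rule rtrancl_into_rtrancl)
  qed simp
  then show ?thesis using assms(3,4) by (simp add: reach_iff_adj_rel)
qed

lemma reach_mono:
  assumes "edges A \<subseteq> edges B" "verts A \<subseteq> verts B" "reach A u v"
  shows "reach B u v"
  using reach_hom[of A id B u v] reach_verts[OF assms(3)] assms by auto

lemma connected_graphI:
  assumes "r \<in> verts G" "\<And>z. z \<in> verts G \<Longrightarrow> reach G z r"
  shows "connected_graph G"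
  unfolding connected_graph_def
proof (intro conjI ballI)
  show "verts G \<noteq> {}" using assms(1) by blast
  fix u v assume "u \<in> verts G" "v \<in> verts G"
  then show "reach G u v" using assms(2)[of u] assms(2)[of v] reach_sym reach_trans by metis
qed

lemma connected_graphD: "connected_graph G \<Longrightarrow> u \<in> verts G \<Longrightarrow> v \<in> verts G \<Longrightarrow> reach G u v"
  by (simp add: connected_graph_def)

lemma reach_induced_reach_set:
  assumes wf: "wf_graph H" and sub: "edges H \<subseteq> edges H'" "verts H \<subseteq> verts H'"
    and r: "reach H u v"
  shows "reach (induced H' {w. reach H u w}) u v"
proof -
  have u: "u \<in> verts H" using reach_verts[OF r] by simp
  have "(u, v) \<in> (adj_rel H)\<^sup>*" using r by (simp add: reach_iff_adj_rel)
  then have "reach H u v \<and> (u, v) \<in> (adj_rel (induced H' {w. reach H u w}))\<^sup>*"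
  proof (induction rule: rtrancl_induct)
    case base then show ?case using reach_refl[OF u] by simp
  next
    case (step y z)
    then have e: "{y, z} \<in> edges H" by (simp add: adj_rel_def)
    then have rz: "reach H u z"
      using step reach_trans reach_edge wf_graph_edge[OF wf] by metis
    then have "(y, z) \<in> adj_rel (induced H' {w. reach H u w})"
      using e sub step by (auto simp: adj_rel_def)
    with step rz show ?case by (meson rtrancl.rtrancl_into_rtrancl)
  qed
  then show ?thesis using reach_verts[OF r] sub by (auto simp: reach_iff_adj_rel)
qed

lemma reach_last_edge:
  assumes wf: "wf_graph R" and r: "reach R u z" and ne: "u \<noteq> z"
  shows "\<exists>w. reach (del_verts R {z}) u w \<and> {w, z} \<in> edges R"
proof -
  let ?R' = "del_verts R {z}"
  have "reach ?R' u y \<or> (\<exists>w. reach ?R' u w \<and> {w, z} \<in> edges R)"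
    if "(u, y) \<in> (adj_rel R)\<^sup>*" for y
    using that
  proof (induction rule: rtrancl_induct)
    case base
    have "u \<in> verts ?R'" using reach_verts[OF r] ne by simp
    then show ?case by (blast intro: reach_refl)
  next
    case (step y y')
    then have e: "{y, y'} \<in> edges R" by (simp add: adj_rel_def)
    show ?case
    proof (cases "reach ?R' u y")
      case True
      show ?thesis
      proof (cases "y' = z")
        case True
        then show ?thesis using \<open>reach ?R' u y\<close> e by blast
      next
        case False
        have "y \<in> verts R - {z}" "y' \<in> verts R" using reach_verts[OF True] wf_graph_edge[OF wf e] by auto
        then have "reach ?R' y y'" using e False by (intro reach_edge) auto
        then have "reach ?R' u y'" by (rule reach_trans[OF True])
        then show ?thesis by blast
      qed
    next
      case False then show ?thesis using step.IH by blast
    qed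
  qed
  moreover have "(u, z) \<in> (adj_rel R)\<^sup>*" using r by (simp add: reach_iff_adj_rel)
  moreover have "\<not> reach ?R' u z" using reach_verts[of ?R' u z] by auto
  ultimately show ?thesis by blast
qed

lemma reach_first_edge:
  assumes wf: "wf_graph B" and r: "reach B u w" and ne: "u \<noteq> w"
  shows "\<exists>y. {u, y} \<in> edges B \<and> y \<noteq> u \<and> y \<in> verts B"
proof -
  have "(u, w) \<in> (adj_rel B)\<^sup>*" using r by (simp add: reach_iff_adj_rel)
  then obtain y where "(u, y) \<in> adj_rel B"
    using ne by (metis converse_rtranclE)
  then show ?thesis using wf_graph_edge[OF wf, of u y] by (auto simp: adj_rel_def)
qed

section \<open>Biconnectivity and blocks\<close>

lemma components_connected:
  assumes "connected_graph G" shows "components G = {verts G}"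
proof -
  have "{v. reach G u v} = verts G" if "u \<in> verts G" for u
  proof
    show "{v. reach G u v} \<subseteq> verts G" using reach_verts by fastforce
    show "verts G \<subseteq> {v. reach G u v}" using connected_graphD[OF assms that] by blast
  qed
  moreover have "verts G \<noteq> {}" using assms by (simp add: connected_graph_def)
  ultimately show ?thesis unfolding components_def by auto
qed

lemma components_subset: "K \<in> components G \<Longrightarrow> K \<subseteq> verts G"
  unfolding components_def using reach_verts by fastforce

lemma connected_if_card_components_le_1:
  assumes fin: "finite (verts G)" and ne: "verts G \<noteq> {}" and c: "card (components G) \<le> 1"
  shows "connected_graph G"
  unfolding connected_graph_def
proof (intro conjI ballI)
  show "verts G \<noteq> {}" by (rule ne)
  have "components G \<subseteq> Pow (verts G)" using components_subset by blast
  then have "finite (components G)" using fin by (meson finite_Pow_iff finite_subset)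
  then have all: "\<forall>x\<in>components G. \<forall>y\<in>components G. x = y"
    using card_le_Suc0_iff_eq c by auto
  fix u w assume u: "u \<in> verts G" and w: "w \<in> verts G"
  have "{v. reach G u v} \<in> components G" "{v. reach G w v} \<in> components G"
    using u w unfolding components_def by blast+
  then have "{v. reach G u v} = {v. reach G w v}" using all by simp
  then show "reach G u w" using reach_refl[OF w] by (simp add: set_eq_iff)
qed

lemma biconnected_del_vertex_connected:
  assumes bc: "biconnected G" and fin: "finite (verts G)" and v: "v \<in> verts G"
    and ne: "verts G - {v} \<noteq> {}"
  shows "connected_graph (del_verts G {v})"
proof -
  have con: "connected_graph G" and "\<not> articulation G v" using bc by (simp_all add: biconnected_def)
  then have "card (components (del_verts G {v})) \<le> card (components G)" using v
    by (simp add: articulation_def)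
  also have "\<dots> = 1" using components_connected[OF con] by simp
  finally show ?thesis using fin ne by (intro connected_if_card_components_le_1) auto
qed

lemma biconnectedI:
  assumes con: "connected_graph G"
    and del: "\<And>v. v \<in> verts G \<Longrightarrow> verts G - {v} \<noteq> {} \<Longrightarrow> connected_graph (del_verts G {v})"
  shows "biconnected G"
  unfolding biconnected_def
proof (intro conjI allI notI)
  show "connected_graph G" by (rule con)
  fix v assume a: "articulation G v"
  then have v: "v \<in> verts G" by (simp add: articulation_def)
  have "card (components (del_verts G {v})) \<le> 1"
  proof (cases "verts G - {v} = {}")
    case True
    then have "verts (del_verts G {v}) = {}" by simp
    then have "components (del_verts G {v}) = {}" unfolding components_def by blast
    then show ?thesis by simp
  next
    case False
    then show ?thesis using components_connected[OF del[OF v False]] by simp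
  qed
  then show False using a components_connected[OF con] by (simp add: articulation_def)
qed

lemma biconnected_reach_del:
  assumes wf: "wf_graph B" and bc: "biconnected B"
    and z: "z \<in> verts B - {v}" and w: "w \<in> verts B - {v}"
  shows "reach (del_verts B {v}) z w"
proof (cases "v \<in> verts B")
  case True
  then have "connected_graph (del_verts B {v})"
    using biconnected_del_vertex_connected[OF bc wf_graph_finite[OF wf]] z by blast
  then show ?thesis using z w by (intro connected_graphD) auto
next
  case False
  have "reach B z w" using bc z w by (intro connected_graphD) (auto simp: biconnected_def)
  then show ?thesis by (rule reach_mono[rotated 2]) (use False wf_graph_edge_subset[OF wf] in auto)
qed

lemma reach_del_verts_mono:
  "verts A \<subseteq> verts H \<Longrightarrow> edges A \<subseteq> edges H \<Longrightarrow> reach (del_verts A S) x y \<Longrightarrow> reach (del_verts H S) x y"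
  by (rule reach_mono[of "del_verts A S"]) auto

lemma reach_del_verts_edge:
  assumes "{x, u} \<in> edges Q" "x \<in> verts Q" "u \<in> verts Q" "v \<noteq> x" "v \<noteq> u"
  shows "reach (del_verts Q {v}) u x"
  using assms by (intro reach_edge) (auto simp: insert_commute)

definition ear_of :: "'a graph \<Rightarrow> 'a set \<Rightarrow> bool" where
  "ear_of Q A \<longleftrightarrow> (\<forall>v. \<forall>z \<in> verts Q - {v}. \<exists>a \<in> A - {v}. reach (del_verts Q {v}) z a)"

lemma biconnected_union_ear:
  assumes bcA: "biconnected A" and wfA: "wf_graph A" and wfQ: "wf_graph Q"
    and xy: "x \<noteq> y" "x \<in> verts A" "y \<in> verts A" and ear: "ear_of Q (verts A)"
  shows "biconnected (union_graph A Q)"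
proof -
  let ?H = "union_graph A Q"
  have sA: "verts A \<subseteq> verts ?H" "edges A \<subseteq> edges ?H"
    and sQ: "verts Q \<subseteq> verts ?H" "edges Q \<subseteq> edges ?H" by auto
  have dcon: "connected_graph (del_verts ?H {v})" for v
  proof -
    obtain a0 where a0: "a0 \<in> verts A - {v}" using xy by blast
    show ?thesis
    proof (rule connected_graphI[of a0])
      show "a0 \<in> verts (del_verts ?H {v})" using a0 by auto
    next
      fix z assume "z \<in> verts (del_verts ?H {v})"
      then consider "z \<in> verts A - {v}" | "z \<in> verts Q - {v}" by auto
      then obtain a where a: "a \<in> verts A - {v}" "reach (del_verts ?H {v}) z a"
      proof cases
        case 1
        then have "reach (del_verts ?H {v}) z z" by (intro reach_refl) auto
        then show ?thesis using that 1 by blast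
      next
        case 2
        then obtain a where a: "a \<in> verts A - {v}" "reach (del_verts Q {v}) z a"
          using ear by (auto simp: ear_of_def)
        show ?thesis using that[OF a(1) reach_del_verts_mono[OF sQ a(2)]] .
      qed
      have "reach (del_verts ?H {v}) a a0"
        using biconnected_reach_del[OF wfA bcA a(1) a0] by (rule reach_del_verts_mono[OF sA])
      with a(2) show "reach (del_verts ?H {v}) z a0" by (rule reach_trans)
    qed
  qed
  have "connected_graph ?H"
  proof (rule connected_graphI[of x])
    show "x \<in> verts ?H" using xy by simp
  next
    fix z assume z: "z \<in> verts ?H"
    show "reach ?H z x"
    proof (cases "z = y")
      case True
      then have "reach A z x" using bcA xy by (intro connected_graphD) (auto simp: biconnected_def)
      then show ?thesis by (rule reach_mono[rotated 2]) auto
    next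
      case False
      then have "reach (del_verts ?H {y}) z x"
        using dcon[of y] xy z by (intro connected_graphD) auto
      then show ?thesis by (rule reach_mono[rotated 2]) auto
    qed
  qed
  then show ?thesis using dcon by (intro biconnectedI)
qed

text \<open>Maximality of both blocks forces \<open>B1 \<union> Q = B1\<close> and \<open>B1 \<union> Q = B2\<close>.\<close>
lemma block_no_ear:
  assumes b1: "is_block C B1" and b2: "is_block C B2" and ne: "B1 \<noteq> B2"
    and wfQ: "wf_graph Q" and QC: "verts Q \<subseteq> verts C" "edges Q \<subseteq> edges C"
    and B2Q: "verts B2 \<subseteq> verts Q" "edges B2 \<subseteq> edges Q"
    and xy: "x \<noteq> y" "x \<in> verts B1" "y \<in> verts B1"
    and ear: "ear_of Q (verts B1)"
  shows False
proof -
  let ?H = "union_graph B1 Q"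
  have s1: "subgraph B1 C" "biconnected B1" and s2: "subgraph B2 C"
    using b1 b2 by (auto simp: is_block_def)
  have wf1: "wf_graph B1" and wf2: "wf_graph B2" using s1 s2 by (auto simp: subgraph_def)
  have bcH: "biconnected ?H" using biconnected_union_ear[OF s1(2) wf1 wfQ xy ear] .
  have HC: "subgraph ?H C" using wf_graph_union[OF wf1 wfQ] QC s1(1) by (auto simp: subgraph_def)
  have "subgraph B1 ?H" using wf1 by (auto simp: subgraph_def)
  then have "?H = B1" using b1 bcH HC unfolding is_block_def by blast
  moreover have "subgraph B2 ?H" using wf2 B2Q by (auto simp: subgraph_def)
  then have "?H = B2" using b2 bcH HC unfolding is_block_def by blast
  ultimately show False using ne by simp
qed

lemma ear_of_biconnected:
  assumes wf: "wf_graph Q" and bc: "biconnected Q" and xy: "x \<noteq> y" "x \<in> verts Q \<inter> A" "y \<in> verts Q \<inter> A"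
  shows "ear_of Q A"
  unfolding ear_of_def
proof (intro allI ballI)
  fix v z assume z: "z \<in> verts Q - {v}"
  define a where "a = (if v = x then y else x)"
  have a: "a \<in> A - {v}" "a \<in> verts Q - {v}" using xy by (auto simp: a_def)
  then show "\<exists>a\<in>A - {v}. reach (del_verts Q {v}) z a"
    using biconnected_reach_del[OF wf bc z a(2)] by blast
qed

lemma blocks_Int_subset:
  assumes b: "is_block C B" and b': "is_block C B'" and ne: "B \<noteq> B'"
    and x: "x \<in> verts B" "x \<in> verts B'"
  shows "verts B \<inter> verts B' \<subseteq> {x}"
proof
  fix y assume y: "y \<in> verts B \<inter> verts B'"
  have wf': "wf_graph B'" and bc': "biconnected B'" and sub': "verts B' \<subseteq> verts C" "edges B' \<subseteq> edges C"
    using b' by (auto simp: is_block_def subgraph_def)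
  show "y \<in> {x}"
  proof (rule ccontr)
    assume "y \<notin> {x}"
    then have "ear_of B' (verts B)" using x y by (intro ear_of_biconnected[OF wf' bc', of x y]) auto
    then show False
      using block_no_ear[OF b b' ne wf' sub' order_refl order_refl, of x y] x y \<open>y \<notin> {x}\<close> by simp
  qed
qed

section \<open>Treewidth\<close>

lemma tree_decompD:
  assumes "tree_decomp G T bag"
  shows "is_tree T" "\<And>i. i \<in> verts T \<Longrightarrow> bag i \<subseteq> verts G"
    "\<And>v. v \<in> verts G \<Longrightarrow> \<exists>i\<in>verts T. v \<in> bag i"
    "\<And>e. e \<in> edges G \<Longrightarrow> \<exists>i\<in>verts T. e \<subseteq> bag i"
    "\<And>v. v \<in> verts G \<Longrightarrow> connected_graph (induced T {i \<in> verts T. v \<in> bag i})"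
  using assms unfolding tree_decomp_def by blast+

lemma tree_decomp_reach:
  assumes "tree_decomp G T bag" "v \<in> verts G" "i \<in> verts T" "j \<in> verts T" "v \<in> bag i" "v \<in> bag j"
  shows "reach (induced T {i \<in> verts T. v \<in> bag i}) i j"
  using tree_decompD(5)[OF assms(1,2)] assms(3-6) by (intro connected_graphD) auto

lemma is_tree_wf_graph: "is_tree T \<Longrightarrow> wf_graph T"
  by (simp add: is_tree_def)

lemma has_tw_le_mono: "has_tw_le G k \<Longrightarrow> k \<le> k' \<Longrightarrow> has_tw_le G k'"
  unfolding has_tw_le_def by fastforce

lemma has_tw_le_card:
  assumes wf: "wf_graph G"
  shows "has_tw_le G (card (verts G))"
proof -
  let ?T = "({0::nat}, {}::nat set set)"
  have con: "connected_graph ?T" by (rule connected_graphI[of 0]) (auto intro: reach_refl)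
  then have "is_tree ?T" by (simp add: is_tree_def wf_graph_def)
  moreover have "induced ?T {i \<in> verts ?T. v \<in> verts G} = ?T" if "v \<in> verts G" for v
    using that by (simp add: induced_def)
  ultimately have "tree_decomp G ?T (\<lambda>_. verts G)"
    using con wf_graph_edge_subset[OF wf] by (simp add: tree_decomp_def)
  then show ?thesis unfolding has_tw_le_def by fastforce
qed

lemma tw_le_iff:
  assumes wf: "wf_graph G"
  shows "tw G \<le> k \<longleftrightarrow> has_tw_le G k"
proof
  assume "tw G \<le> k"
  have "has_tw_le G (tw G)" unfolding tw_def using has_tw_le_card[OF wf] by (rule LeastI)
  then show "has_tw_le G k" using \<open>tw G \<le> k\<close> by (rule has_tw_le_mono)
next
  assume "has_tw_le G k"
  then show "tw G \<le> k" unfolding tw_def by (rule Least_le)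
qed

lemma is_solutionI:
  assumes "wf_graph H" "S \<subseteq> verts H" "card S \<le> t" "has_tw_le (del_verts H S) 2"
  shows "is_solution H t S"
  using assms tw_le_iff[OF wf_graph_del_verts[OF assms(1)]] by (simp add: is_solution_def)

lemma card_insert_Diff_le:
  assumes fin: "finite A" and "a \<in> A \<or> A \<inter> B \<noteq> {}"
  shows "card (insert a (A - B)) \<le> card A"
proof (cases "a \<in> A")
  case True
  then show ?thesis using fin by (intro card_mono) auto
next
  case False
  then obtain u where u: "u \<in> A" "u \<in> B" using assms(2) by blast
  have "card (insert a (A - B)) \<le> card (insert a (A - {u}))" using fin u by (intro card_mono) auto
  also have "\<dots> \<le> Suc (card (A - {u}))" by (rule card_insert_le_m1) (use fin in simp_all)
  also have "\<dots> = card A" using card_Suc_Diff1[OF fin u(1)] .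
  finally show ?thesis .
qed

lemma has_tw_le_subgraph:
  assumes fin: "finite (verts G)" and wfH: "wf_graph H" and sv: "verts H \<subseteq> verts G"
    and se: "edges H \<subseteq> edges G" and tw: "has_tw_le G k"
  shows "has_tw_le H k"
proof -
  obtain T bag where td: "tree_decomp G T bag" and cb: "\<forall>i\<in>verts T. card (bag i) \<le> k + 1"
    using tw unfolding has_tw_le_def by blast
  define bag' where "bag' i = bag i \<inter> verts H" for i
  have "tree_decomp H T bag'"
    unfolding tree_decomp_def
  proof (intro conjI ballI)
    fix v assume v: "v \<in> verts H"
    have "{i \<in> verts T. v \<in> bag' i} = {i \<in> verts T. v \<in> bag i}" using v by (auto simp: bag'_def)
    then show "connected_graph (induced T {i \<in> verts T. v \<in> bag' i})"
      using tree_decompD(5)[OF td] v sv by auto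
  next
    fix e assume "e \<in> edges H"
    then show "\<exists>i\<in>verts T. e \<subseteq> bag' i"
      using tree_decompD(4)[OF td] se wf_graph_edge_subset[OF wfH] by (fastforce simp: bag'_def)
  qed (use tree_decompD[OF td] sv in \<open>fastforce simp: bag'_def\<close>)+
  moreover have "card (bag' i) \<le> k + 1" if "i \<in> verts T" for i
  proof -
    have "finite (bag i)" using tree_decompD(2)[OF td that] fin finite_subset by blast
    then have "card (bag' i) \<le> card (bag i)" unfolding bag'_def by (intro card_mono) auto
    then show ?thesis using cb that by fastforce
  qed
  ultimately show ?thesis unfolding has_tw_le_def by blast
qed

subsection \<open>Contracting a connected set\<close>

lemma tree_decomp_bags_meeting_connected:
  assumes td: "tree_decomp G T bag" and W: "W \<subseteq> verts G" and con: "connected_graph (induced G W)"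
  shows "connected_graph (induced T {i \<in> verts T. bag i \<inter> W \<noteq> {}})"
proof -
  define M where "M = {i \<in> verts T. bag i \<inter> W \<noteq> {}}"
  obtain w0 where w0: "w0 \<in> W" using con unfolding connected_graph_def by auto
  obtain i0 where i0: "i0 \<in> verts T" "w0 \<in> bag i0" using tree_decompD(3)[OF td] W w0 by blast
  have bags_of: "reach (induced T M) i j"
    if "w \<in> W" "i \<in> verts T" "j \<in> verts T" "w \<in> bag i" "w \<in> bag j" for w i j
  proof -
    have "reach (induced T {i \<in> verts T. w \<in> bag i}) i j"
      using tree_decomp_reach[OF td _ that(2-5)] that(1) W by blast
    then show ?thesis by (rule reach_mono[rotated 2]) (use that(1) in \<open>auto simp: M_def\<close>)
  qed
  have "\<forall>i\<in>verts T. y \<in> bag i \<longrightarrow> reach (induced T M) i0 i"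
    if "(w0, y) \<in> (adj_rel (induced G W))\<^sup>*" for y
    using that
  proof (induction rule: rtrancl_induct)
    case base
    then show ?case using bags_of[OF w0 i0(1)] i0(2) by blast
  next
    case (step x y)
    then have e: "{x, y} \<in> edges G" "{x, y} \<subseteq> W" by (auto simp: adj_rel_def)
    obtain j where j: "j \<in> verts T" "{x, y} \<subseteq> bag j" using tree_decompD(4)[OF td e(1)] by blast
    have "reach (induced T M) i0 j" using step.IH j by auto
    show ?case
    proof (intro ballI impI)
      fix i assume "i \<in> verts T" "y \<in> bag i"
      then have "reach (induced T M) j i" using bags_of[of y j i] j e(2) by blast
      with \<open>reach (induced T M) i0 j\<close> show "reach (induced T M) i0 i" by (rule reach_trans)
    qed
  qed
  then have "reach (induced T M) i0 i" if "i \<in> verts T" "w \<in> bag i" "w \<in> W" for i w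
    using that connected_graphD[OF con, of w0 w] w0 W by (auto simp: reach_iff_adj_rel)
  then have "reach (induced T M) i i0" if "i \<in> verts (induced T M)" for i
    using that reach_sym by (fastforce simp: M_def)
  then have "connected_graph (induced T M)"
    using i0 w0 by (intro connected_graphI[of i0]) (auto simp: M_def)
  then show ?thesis by (simp add: M_def)
qed

lemma has_tw_le_contract_into:
  assumes fin: "finite (verts G)" and W: "W \<subseteq> verts G" and con: "connected_graph (induced G W)"
    and z: "z \<notin> verts G - W" and tw: "has_tw_le G k"
  shows "has_tw_le (contract_into G W z) k"
proof -
  obtain T bag where td: "tree_decomp G T bag" and cb: "\<forall>i\<in>verts T. card (bag i) \<le> k + 1"
    using tw unfolding has_tw_le_def by blast
  define bag' where "bag' i = (if bag i \<inter> W = {} then bag i else (bag i - W) \<union> {z})" for i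
  obtain w0 where w0: "w0 \<in> W" using con unfolding connected_graph_def by auto
  obtain i0 where i0: "i0 \<in> verts T" "w0 \<in> bag i0" using tree_decompD(3)[OF td] W w0 by blast
  have "tree_decomp (contract_into G W z) T bag'"
    unfolding tree_decomp_def
  proof (intro conjI ballI)
    show "is_tree T" using tree_decompD(1)[OF td] .
  next
    fix i assume "i \<in> verts T"
    then show "bag' i \<subseteq> verts (contract_into G W z)" using tree_decompD(2)[OF td] by (auto simp: bag'_def)
  next
    fix v assume v: "v \<in> verts (contract_into G W z)"
    show "\<exists>i\<in>verts T. v \<in> bag' i"
    proof (cases "v = z")
      case True then show ?thesis using i0 w0 by (auto simp: bag'_def)
    next
      case False
      then have "v \<in> verts G - W" using v by simp
      then show ?thesis using tree_decompD(3)[OF td, of v] by (auto simp: bag'_def)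
    qed
    show "connected_graph (induced T {i \<in> verts T. v \<in> bag' i})"
    proof (cases "v = z")
      case True
      have "{i \<in> verts T. v \<in> bag' i} = {i \<in> verts T. bag i \<inter> W \<noteq> {}}"
        using tree_decompD(2)[OF td] z True by (auto simp: bag'_def)
      then show ?thesis using tree_decomp_bags_meeting_connected[OF td W con] by simp
    next
      case False
      then have "v \<in> verts G - W" using v by simp
      moreover have "{i \<in> verts T. v \<in> bag' i} = {i \<in> verts T. v \<in> bag i}"
        using False calculation by (auto simp: bag'_def)
      ultimately show ?thesis using tree_decompD(5)[OF td, of v] by simp
    qed
  next
    fix e assume "e \<in> edges (contract_into G W z)"
    then consider "e \<in> edges G" "e \<inter> W = {}" | w where "e = {z, w}" "w \<in> nbhd G W" by auto
    then show "\<exists>i\<in>verts T. e \<subseteq> bag' i"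
    proof cases
      case 1
      then obtain i where "i \<in> verts T" "e \<subseteq> bag i" using tree_decompD(4)[OF td] by blast
      then show ?thesis using 1 by (auto simp: bag'_def)
    next
      case 2
      then obtain u where u: "u \<in> W" "{u, w} \<in> edges G" "w \<notin> W" by (auto simp: nbhd_def)
      then obtain i where "i \<in> verts T" "{u, w} \<subseteq> bag i" using tree_decompD(4)[OF td] by blast
      then show ?thesis using 2 u by (auto simp: bag'_def)
    qed
  qed
  moreover have "card (bag' i) \<le> k + 1" if i: "i \<in> verts T" for i
  proof -
    have fb: "finite (bag i)" using tree_decompD(2)[OF td i] fin finite_subset by blast
    have "card (bag' i) \<le> card (bag i)"
    proof (cases "bag i \<inter> W = {}")
      case False
      then have "card (bag i - W) < card (bag i)" using fb by (intro psubset_card_mono) auto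
      then show ?thesis using fb False by (simp add: bag'_def card_insert_if)
    qed (simp add: bag'_def)
    then show ?thesis using cb i by fastforce
  qed
  ultimately show ?thesis unfolding has_tw_le_def by blast
qed

subsection \<open>Gluing along at most one vertex\<close>

text \<open>Two decomposition trees are joined by an edge, after renumbering their nodes into
  the even and the odd numbers.\<close>
definition lnode :: "nat \<Rightarrow> nat" where "lnode i = 2 * i"
definition rnode :: "nat \<Rightarrow> nat" where "rnode j = Suc (2 * j)"

definition join_tree :: "nat graph \<Rightarrow> nat \<Rightarrow> nat graph \<Rightarrow> nat \<Rightarrow> nat graph" where
  "join_tree T1 i T2 j =
     (lnode ` verts T1 \<union> rnode ` verts T2,
      image lnode ` edges T1 \<union> image rnode ` edges T2 \<union> {{lnode i, rnode j}})"

definition join_bags :: "(nat \<Rightarrow> 'a set) \<Rightarrow> (nat \<Rightarrow> 'a set) \<Rightarrow> nat \<Rightarrow> 'a set" where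
  "join_bags b1 b2 n = (if even n then b1 (n div 2) else b2 (n div 2))"

lemma lnode_neq_rnode [simp]: "lnode x \<noteq> rnode y" "rnode y \<noteq> lnode x"
  unfolding lnode_def rnode_def by presburger+

lemma inj_lnode: "inj lnode" and inj_rnode: "inj rnode"
  unfolding lnode_def rnode_def inj_def by auto

lemma join_bags_lnode [simp]: "join_bags b1 b2 (lnode i) = b1 i"
  and join_bags_rnode [simp]: "join_bags b1 b2 (rnode j) = b2 j"
  by (simp_all add: join_bags_def lnode_def rnode_def)

lemma verts_join_tree [simp]: "verts (join_tree T1 i T2 j) = lnode ` verts T1 \<union> rnode ` verts T2"
  by (simp add: join_tree_def)

lemma edges_join_tree:
  "edges (join_tree T1 i T2 j) = image lnode ` edges T1 \<union> image rnode ` edges T2 \<union> {{lnode i, rnode j}}"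
  by (simp add: join_tree_def)

lemma join_tree_lnode_edge: "{x, y} \<in> edges T1 \<Longrightarrow> {lnode x, lnode y} \<in> edges (join_tree T1 i T2 j)"
  and join_tree_rnode_edge: "{x, y} \<in> edges T2 \<Longrightarrow> {rnode x, rnode y} \<in> edges (join_tree T1 i T2 j)"
  by (simp_all add: edges_join_tree image_iff) (metis image_insert image_empty)+

lemma join_tree_link_edge: "{lnode i, rnode j} \<in> edges (join_tree T1 i T2 j)"
  by (simp add: edges_join_tree)

lemma wf_graph_join_tree:
  assumes wf1: "wf_graph T1" and wf2: "wf_graph T2" and i: "i \<in> verts T1" and j: "j \<in> verts T2"
  shows "wf_graph (join_tree T1 i T2 j)"
  unfolding wf_graph_def
proof (intro conjI ballI)
  show "finite (verts (join_tree T1 i T2 j))" using wf1 wf2 by (simp add: wf_graph_finite)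
  fix e assume "e \<in> edges (join_tree T1 i T2 j)"
  then consider e' where "e' \<in> edges T1" "e = lnode ` e'" | e' where "e' \<in> edges T2" "e = rnode ` e'"
    | "e = {lnode i, rnode j}"
    by (auto simp: edges_join_tree)
  then show "\<exists>u v. u \<noteq> v \<and> e = {u, v} \<and> u \<in> verts (join_tree T1 i T2 j) \<and> v \<in> verts (join_tree T1 i T2 j)"
  proof cases
    case 1
    then obtain u v where "u \<noteq> v" "e' = {u, v}" "u \<in> verts T1" "v \<in> verts T1" using wf_graphD[OF wf1] by blast
    then show ?thesis using 1 by (intro exI[of _ "lnode u"] exI[of _ "lnode v"]) (simp add: inj_eq[OF inj_lnode])
  next
    case 2
    then obtain u v where "u \<noteq> v" "e' = {u, v}" "u \<in> verts T2" "v \<in> verts T2" using wf_graphD[OF wf2] by blast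
    then show ?thesis using 2 by (intro exI[of _ "rnode u"] exI[of _ "rnode v"]) (simp add: inj_eq[OF inj_rnode])
  next
    case 3 then show ?thesis using i j by (intro exI[of _ "lnode i"] exI[of _ "rnode j"]) auto
  qed
qed

lemma card_verts_join_tree:
  assumes "finite (verts T1)" "finite (verts T2)"
  shows "card (verts (join_tree T1 i T2 j)) = card (verts T1) + card (verts T2)"
proof -
  have "card (verts (join_tree T1 i T2 j)) = card (lnode ` verts T1) + card (rnode ` verts T2)"
    unfolding verts_join_tree using assms by (intro card_Un_disjoint) auto
  also have "\<dots> = card (verts T1) + card (verts T2)"
    using inj_lnode inj_rnode by (simp add: card_image inj_on_subset)
  finally show ?thesis .
qed

lemma card_edges_join_tree:
  assumes wf1: "wf_graph T1" and wf2: "wf_graph T2"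
  shows "card (edges (join_tree T1 i T2 j)) = card (edges T1) + card (edges T2) + 1"
proof -
  define E1 where "E1 = image lnode ` edges T1"
  define E2 where "E2 = image rnode ` edges T2"
  have "E1 \<inter> E2 = {}"
  proof (rule ccontr)
    assume "E1 \<inter> E2 \<noteq> {}"
    then obtain e1 e2 where e: "e1 \<in> edges T1" "lnode ` e1 = rnode ` e2" by (auto simp: E1_def E2_def)
    obtain x where "x \<in> e1" using wf_graphD[OF wf1 e(1)] by blast
    then have "lnode x \<in> rnode ` e2" using e(2) by (metis imageI)
    then show False by auto
  qed
  moreover have "{lnode i, rnode j} \<notin> E1 \<union> E2"
  proof
    assume "{lnode i, rnode j} \<in> E1 \<union> E2"
    then obtain e where "{lnode i, rnode j} = lnode ` e \<or> {lnode i, rnode j} = rnode ` e"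
      by (auto simp: E1_def E2_def)
    then have "rnode j \<in> lnode ` e \<or> lnode i \<in> rnode ` e" by (metis insertI1 insert_commute)
    then show False by auto
  qed
  moreover have "card E1 = card (edges T1)" unfolding E1_def
    by (rule card_image) (meson inj_lnode inj_image_eq_iff inj_onI)
  moreover have "card E2 = card (edges T2)" unfolding E2_def
    by (rule card_image) (meson inj_rnode inj_image_eq_iff inj_onI)
  moreover have "finite E1" "finite E2" using wf1 wf2 by (simp_all add: E1_def E2_def wf_graph_finite_edges)
  moreover have "edges (join_tree T1 i T2 j) = insert {lnode i, rnode j} (E1 \<union> E2)"
    by (auto simp: edges_join_tree E1_def E2_def)
  ultimately show ?thesis by (simp add: card_Un_disjoint)
qed

lemma induced_verts_self:
  assumes "wf_graph G" shows "induced G (verts G) = G"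
proof -
  have "{e \<in> edges G. e \<subseteq> verts G} = edges G" using wf_graph_edge_subset[OF assms] by blast
  then show ?thesis by (simp add: induced_def verts_def edges_def)
qed

lemma connected_join_tree_induced:
  assumes AB: "A \<subseteq> verts T1" "B \<subseteq> verts T2"
    and cA: "A \<noteq> {} \<Longrightarrow> connected_graph (induced T1 A)"
    and cB: "B \<noteq> {} \<Longrightarrow> connected_graph (induced T2 B)"
    and ne: "A \<noteq> {} \<or> B \<noteq> {}" and link: "A \<noteq> {} \<Longrightarrow> B \<noteq> {} \<Longrightarrow> i \<in> A \<and> j \<in> B"
  shows "connected_graph (induced (join_tree T1 i T2 j) (lnode ` A \<union> rnode ` B))"
proof -
  let ?H = "induced (join_tree T1 i T2 j) (lnode ` A \<union> rnode ` B)"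
  have vH: "verts ?H = lnode ` A \<union> rnode ` B" using AB by auto
  have ll: "reach ?H (lnode x) (lnode y)" if "x \<in> A" "y \<in> A" for x y
  proof (rule reach_hom[of "induced T1 A" lnode])
    show "reach (induced T1 A) x y" using cA that AB by (intro connected_graphD) auto
  qed (use that vH join_tree_lnode_edge in auto)
  have rr: "reach ?H (rnode x) (rnode y)" if "x \<in> B" "y \<in> B" for x y
  proof (rule reach_hom[of "induced T2 B" rnode])
    show "reach (induced T2 B) x y" using cB that AB by (intro connected_graphD) auto
  qed (use that vH join_tree_rnode_edge in auto)
  have lr: "reach ?H (lnode x) (rnode y)" if "x \<in> A" "y \<in> B" for x y
  proof -
    have ij: "i \<in> A" "j \<in> B" using link that by blast+
    have "reach ?H (lnode i) (rnode j)" using ij vH join_tree_link_edge by (intro reach_edge) auto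
    with ll[OF that(1) ij(1)] have "reach ?H (lnode x) (rnode j)" by (rule reach_trans)
    then show ?thesis using rr[OF ij(2) that(2)] by (rule reach_trans)
  qed
  show ?thesis
    unfolding connected_graph_def
  proof (intro conjI ballI)
    show "verts ?H \<noteq> {}" using ne vH by auto
    have side: "(\<exists>x\<in>A. w = lnode x) \<or> (\<exists>x\<in>B. w = rnode x)" if "w \<in> verts ?H" for w
      using that vH by blast
    fix u v assume "u \<in> verts ?H" "v \<in> verts ?H"
    then show "reach ?H u v"
      using side[of u] side[of v] ll lr rr lr[THEN reach_sym] by blast
  qed
qed

lemma is_tree_join_tree:
  assumes t1: "is_tree T1" and t2: "is_tree T2" and i: "i \<in> verts T1" and j: "j \<in> verts T2"
  shows "is_tree (join_tree T1 i T2 j)"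
proof -
  have wf: "wf_graph (join_tree T1 i T2 j)"
    using wf_graph_join_tree[OF is_tree_wf_graph[OF t1] is_tree_wf_graph[OF t2] i j] .
  have "connected_graph (induced (join_tree T1 i T2 j) (lnode ` verts T1 \<union> rnode ` verts T2))"
    using i j t1 t2 by (intro connected_join_tree_induced) (auto simp: induced_verts_self is_tree_def)
  then have "connected_graph (join_tree T1 i T2 j)" using induced_verts_self[OF wf] by simp
  moreover have "card (edges (join_tree T1 i T2 j)) + 1 = card (verts (join_tree T1 i T2 j))"
    using card_verts_join_tree[of T1 T2 i j] card_edges_join_tree[of T1 T2 i j] t1 t2
    by (simp add: is_tree_def wf_graph_finite)
  ultimately show ?thesis using wf by (simp add: is_tree_def)
qed

lemma tree_decomp_join:
  assumes td1: "tree_decomp G1 T1 b1" and td2: "tree_decomp G2 T2 b2"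
    and sh: "verts G1 \<inter> verts G2 \<subseteq> {c}"
    and i: "i \<in> verts T1" "c \<in> verts G1 \<Longrightarrow> c \<in> b1 i"
    and j: "j \<in> verts T2" "c \<in> verts G2 \<Longrightarrow> c \<in> b2 j"
  shows "tree_decomp (union_graph G1 G2) (join_tree T1 i T2 j) (join_bags b1 b2)"
proof -
  note t1 = tree_decompD[OF td1] and t2 = tree_decompD[OF td2]
  show ?thesis
    unfolding tree_decomp_def
  proof (intro conjI ballI)
    show "is_tree (join_tree T1 i T2 j)" using is_tree_join_tree[OF t1(1) t2(1) i(1) j(1)] .
    fix v assume v: "v \<in> verts (union_graph G1 G2)"
    define A where "A = {i \<in> verts T1. v \<in> b1 i}"
    define B where "B = {j \<in> verts T2. v \<in> b2 j}"
    have "{n \<in> verts (join_tree T1 i T2 j). v \<in> join_bags b1 b2 n} = lnode ` A \<union> rnode ` B"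
      by (auto simp: A_def B_def)
    moreover have "connected_graph (induced (join_tree T1 i T2 j) (lnode ` A \<union> rnode ` B))"
    proof (rule connected_join_tree_induced)
      show "connected_graph (induced T1 A)" if "A \<noteq> {}"
      proof -
        have "v \<in> verts G1" using that t1(2) by (auto simp: A_def)
        then show ?thesis using t1(5) by (simp add: A_def)
      qed
      show "connected_graph (induced T2 B)" if "B \<noteq> {}"
      proof -
        have "v \<in> verts G2" using that t2(2) by (auto simp: B_def)
        then show ?thesis using t2(5) by (simp add: B_def)
      qed
      show "A \<noteq> {} \<or> B \<noteq> {}" using v t1(3)[of v] t2(3)[of v] by (auto simp: A_def B_def)
      show "i \<in> A \<and> j \<in> B" if "A \<noteq> {}" "B \<noteq> {}"
      proof -
        have "v \<in> verts G1" "v \<in> verts G2" using that t1(2) t2(2) by (auto simp: A_def B_def)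
        then show ?thesis using sh i j by (auto simp: A_def B_def)
      qed
    qed (auto simp: A_def B_def)
    ultimately show "connected_graph (induced (join_tree T1 i T2 j)
        {n \<in> verts (join_tree T1 i T2 j). v \<in> join_bags b1 b2 n})" by simp
    show "\<exists>n\<in>verts (join_tree T1 i T2 j). v \<in> join_bags b1 b2 n"
    proof (cases "v \<in> verts G1")
      case True
      then obtain x where "x \<in> verts T1" "v \<in> b1 x" using t1(3) by blast
      then show ?thesis by (intro bexI[of _ "lnode x"]) auto
    next
      case False
      then obtain x where "x \<in> verts T2" "v \<in> b2 x" using v t2(3) by auto
      then show ?thesis by (intro bexI[of _ "rnode x"]) auto
    qed
  next
    fix e assume "e \<in> edges (union_graph G1 G2)"
    then consider "e \<in> edges G1" | "e \<in> edges G2" by auto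
    then show "\<exists>n\<in>verts (join_tree T1 i T2 j). e \<subseteq> join_bags b1 b2 n"
    proof cases
      case 1
      then obtain x where "x \<in> verts T1" "e \<subseteq> b1 x" using t1(4) by blast
      then show ?thesis by (intro bexI[of _ "lnode x"]) auto
    next
      case 2
      then obtain x where "x \<in> verts T2" "e \<subseteq> b2 x" using t2(4) by blast
      then show ?thesis by (intro bexI[of _ "rnode x"]) auto
    qed
  next
    fix n assume "n \<in> verts (join_tree T1 i T2 j)"
    then show "join_bags b1 b2 n \<subseteq> verts (union_graph G1 G2)" using t1(2) t2(2) by fastforce
  qed
qed

lemma has_tw_le_union:
  assumes tw1: "has_tw_le G1 k" and tw2: "has_tw_le G2 k" and sh: "verts G1 \<inter> verts G2 \<subseteq> {c}"
  shows "has_tw_le (union_graph G1 G2) k"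
proof -
  obtain T1 b1 where td1: "tree_decomp G1 T1 b1" and cb1: "\<forall>i\<in>verts T1. card (b1 i) \<le> k + 1"
    using tw1 unfolding has_tw_le_def by blast
  obtain T2 b2 where td2: "tree_decomp G2 T2 b2" and cb2: "\<forall>i\<in>verts T2. card (b2 i) \<le> k + 1"
    using tw2 unfolding has_tw_le_def by blast
  obtain i where i: "i \<in> verts T1" "c \<in> verts G1 \<Longrightarrow> c \<in> b1 i"
    using tree_decompD(3)[OF td1, of c] tree_decompD(1)[OF td1] by (auto simp: is_tree_def connected_graph_def)
  obtain j where j: "j \<in> verts T2" "c \<in> verts G2 \<Longrightarrow> c \<in> b2 j"
    using tree_decompD(3)[OF td2, of c] tree_decompD(1)[OF td2] by (auto simp: is_tree_def connected_graph_def)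
  have "tree_decomp (union_graph G1 G2) (join_tree T1 i T2 j) (join_bags b1 b2)"
    using tree_decomp_join[OF td1 td2 sh i j] .
  moreover have "\<forall>n\<in>verts (join_tree T1 i T2 j). card (join_bags b1 b2 n) \<le> k + 1"
    using cb1 cb2 by auto
  ultimately show ?thesis unfolding has_tw_le_def by blast
qed

lemma has_tw_le_subgraph_union:
  assumes "has_tw_le G1 k" "has_tw_le G2 k" "verts G1 \<inter> verts G2 \<subseteq> {c}"
    "finite (verts G1)" "finite (verts G2)" "wf_graph H"
    "verts H \<subseteq> verts G1 \<union> verts G2" "edges H \<subseteq> edges G1 \<union> edges G2"
  shows "has_tw_le H k"
  using has_tw_le_subgraph[OF _ assms(6) _ _ has_tw_le_union[OF assms(1-3)]] assms(4,5,7,8) by simp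

section \<open>The chain of three blocks\<close>

locale block_chain =
  fixes G :: "'a graph" and t :: nat and X :: "'a set" and K :: "'a set"
    and a1 a2 a3 a4 :: 'a and B1 B2 B3 :: "'a graph"
  assumes wf_G: "wf_graph G"
    and nontrivial: "\<not> trivial_instance G t"
    and modulator_X: "modulator G X"
    and component: "K \<in> components (del_verts G X)"
    and adj: "bc_adj (induced G K) a1 B1" "bc_adj (induced G K) a2 B1"
      "bc_adj (induced G K) a2 B2" "bc_adj (induced G K) a3 B2"
      "bc_adj (induced G K) a3 B3" "bc_adj (induced G K) a4 B3"
    and distinct_cuts: "distinct [a1, a2, a3, a4]" and distinct_blocks: "distinct [B1, B2, B3]"
    and nbhd_chain: "nbhd G ((verts B1 \<union> verts B2 \<union> verts B3) - {a1, a4}) = {a1, a4}"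
begin

abbreviation "C \<equiv> induced G K"
abbreviation "V \<equiv> verts G"
abbreviation "V1 \<equiv> verts B1"
abbreviation "V2 \<equiv> verts B2"
abbreviation "V3 \<equiv> verts B3"
abbreviation "G' \<equiv> contract_into G V1 a1"

definition U :: "'a set" where "U = (V1 \<union> V2 \<union> V3) - {a1, a4}"
definition U23 :: "'a set" where "U23 = (V2 \<union> V3) - {a2, a4}"

lemma finite_V: "finite V"
  using wf_G by (rule wf_graph_finite)

lemma blocks: "is_block C B1" "is_block C B2" "is_block C B3"
  using adj by (auto simp: bc_adj_def)

lemma cuts_mem: "a1 \<in> V1" "a2 \<in> V1" "a2 \<in> V2" "a3 \<in> V2" "a3 \<in> V3" "a4 \<in> V3"
  using adj by (auto simp: bc_adj_def)

lemma cuts_neq: "a1 \<noteq> a2" "a1 \<noteq> a3" "a1 \<noteq> a4" "a2 \<noteq> a3" "a2 \<noteq> a4" "a3 \<noteq> a4"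
  and blocks_neq: "B1 \<noteq> B2" "B1 \<noteq> B3" "B2 \<noteq> B3"
  using distinct_cuts distinct_blocks by auto

lemma wf_blocks: "wf_graph B1" "wf_graph B2" "wf_graph B3"
  and biconnected_blocks: "biconnected B1" "biconnected B2" "biconnected B3"
  and block_verts: "V1 \<subseteq> V \<inter> K" "V2 \<subseteq> V \<inter> K" "V3 \<subseteq> V \<inter> K"
  and block_edges: "edges B1 \<subseteq> edges C" "edges B2 \<subseteq> edges C" "edges B3 \<subseteq> edges C"
  using blocks by (auto simp: is_block_def subgraph_def)

lemma cuts_in_V: "a1 \<in> V" "a2 \<in> V" "a3 \<in> V" "a4 \<in> V"
  using cuts_mem block_verts by auto

lemma K_subset: "K \<subseteq> V - X"
  using components_subset[OF component] by simp

lemma V1_Int_V2: "V1 \<inter> V2 \<subseteq> {a2}"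
  using blocks_Int_subset[OF blocks(1,2) blocks_neq(1)] cuts_mem by simp

lemma V2_Int_V3: "V2 \<inter> V3 \<subseteq> {a3}"
  using blocks_Int_subset[OF blocks(2,3) blocks_neq(3)] cuts_mem by simp

lemma cuts_not_mem: "a3 \<notin> V1" "a1 \<notin> V2" "a2 \<notin> V3" "a4 \<notin> V2"
  using V1_Int_V2 V2_Int_V3 cuts_mem cuts_neq by blast+

lemma B2_reach_del:
  assumes "V2 \<subseteq> verts Q" "edges B2 \<subseteq> edges Q" "x \<in> V2 - {v}" "y \<in> V2 - {v}"
  shows "reach (del_verts Q {v}) x y"
  using biconnected_reach_del[OF wf_blocks(2) biconnected_blocks(2) assms(3,4)]
  by (rule reach_del_verts_mono[OF assms(1,2)])

lemma B3_reach_del: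
  assumes "V3 \<subseteq> verts Q" "edges B3 \<subseteq> edges Q" "x \<in> V3 - {v}" "y \<in> V3 - {v}"
  shows "reach (del_verts Q {v}) x y"
  using biconnected_reach_del[OF wf_blocks(3) biconnected_blocks(3) assms(3,4)]
  by (rule reach_del_verts_mono[OF assms(1,2)])

lemma ear_of_B2_B3_if_V1_meets_V3:
  assumes r: "r \<in> V1" "r \<in> V3"
  shows "ear_of (union_graph B2 B3) V1"
  unfolding ear_of_def
proof (intro allI ballI)
  let ?Q = "union_graph B2 B3"
  have ra: "r \<noteq> a2" "r \<noteq> a3" using r cuts_not_mem by auto
  have s2: "V2 \<subseteq> verts ?Q" "edges B2 \<subseteq> edges ?Q" and s3: "V3 \<subseteq> verts ?Q" "edges B3 \<subseteq> edges ?Q"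
    by auto
  fix v z assume z: "z \<in> verts ?Q - {v}"
  show "\<exists>a\<in>V1 - {v}. reach (del_verts ?Q {v}) z a"
  proof (cases "z \<in> V2")
    case zV2: True
    show ?thesis
    proof (cases "v = a2")
      case False
      have "reach (del_verts ?Q {v}) z a2" using B2_reach_del[OF s2, of z v a2] zV2 z False cuts_mem by auto
      then show ?thesis using cuts_mem False by blast
    next
      case True
      have "reach (del_verts ?Q {v}) z a3" using B2_reach_del[OF s2, of z v a3] zV2 z True cuts_mem cuts_neq by auto
      moreover have "reach (del_verts ?Q {v}) a3 r" using B3_reach_del[OF s3, of a3 v r] True cuts_mem ra r cuts_neq by auto
      ultimately have "reach (del_verts ?Q {v}) z r" by (rule reach_trans)
      then show ?thesis using r True ra by blast
    qed
  next
    case False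
    then have zV3: "z \<in> V3" using z by auto
    show ?thesis
    proof (cases "v = r")
      case False
      have "reach (del_verts ?Q {v}) z r" using B3_reach_del[OF s3, of z v r] zV3 z False r by auto
      then show ?thesis using r False by blast
    next
      case True
      have "reach (del_verts ?Q {v}) z a3" using B3_reach_del[OF s3, of z v a3] zV3 z True ra cuts_mem by auto
      moreover have "reach (del_verts ?Q {v}) a3 a2" using B2_reach_del[OF s2, of a3 v a2] True cuts_mem ra by auto
      ultimately have "reach (del_verts ?Q {v}) z a2" by (rule reach_trans)
      then show ?thesis using cuts_mem True ra by blast
    qed
  qed
qed

lemma V1_Int_V3: "V1 \<inter> V3 = {}"
proof (rule ccontr)
  assume "V1 \<inter> V3 \<noteq> {}"
  then obtain r where "r \<in> V1" "r \<in> V3" by blast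
  then have ear: "ear_of (union_graph B2 B3) V1" by (rule ear_of_B2_B3_if_V1_meets_V3)
  have QC: "verts (union_graph B2 B3) \<subseteq> verts C" "edges (union_graph B2 B3) \<subseteq> edges C"
    using block_verts block_edges by auto
  show False
    by (rule block_no_ear[OF blocks(1,2) blocks_neq(1) wf_graph_union[OF wf_blocks(2,3)] QC _ _
          cuts_neq(1) cuts_mem(1,2) ear]) auto
qed

lemma a4_not_in_V1: "a4 \<notin> V1"
  using V1_Int_V3 cuts_mem by blast

lemma U23_props: "U23 \<subseteq> U" "U23 \<inter> V1 = {}" "a1 \<notin> U23" "a2 \<notin> U23" "a4 \<notin> U23" "a3 \<in> U23"
  using cuts_not_mem V1_Int_V2 V1_Int_V3 cuts_mem cuts_neq by (auto simp: U23_def U_def)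

lemma U_props: "V1 \<subseteq> U \<union> {a1, a4}" "U \<subseteq> K" "U \<subseteq> V" "a1 \<in> K" "a4 \<in> K" "U23 \<subseteq> V"
  using block_verts cuts_mem unfolding U_def U23_def by auto

lemma ear_of_B2_plus_edge:
  assumes x: "x \<in> V1" "x \<noteq> a2" and u: "u \<in> V2" "u \<noteq> a2"
  shows "ear_of (V2 \<union> {x}, edges B2 \<union> {{x, u}}) V1"
  unfolding ear_of_def
proof (intro allI ballI)
  let ?Q = "(V2 \<union> {x}, edges B2 \<union> {{x, u}})"
  have s2: "V2 \<subseteq> verts ?Q" "edges B2 \<subseteq> edges ?Q" by auto
  fix v z assume z: "z \<in> verts ?Q - {v}"
  show "\<exists>a\<in>V1 - {v}. reach (del_verts ?Q {v}) z a"
  proof (cases "z = x")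
    case True
    then have "reach (del_verts ?Q {v}) x x" using z by (intro reach_refl) auto
    then show ?thesis using x z True by blast
  next
    case False
    then have zV2: "z \<in> V2" using z by auto
    show ?thesis
    proof (cases "v = a2")
      case False
      have "reach (del_verts ?Q {v}) z a2" using B2_reach_del[OF s2, of z v a2] zV2 z False cuts_mem by auto
      then show ?thesis using cuts_mem False by blast
    next
      case True
      have "reach (del_verts ?Q {v}) z u" using B2_reach_del[OF s2, of z v u] zV2 z True u by auto
      moreover have "reach (del_verts ?Q {v}) u x" using True x u by (intro reach_del_verts_edge) auto
      ultimately have "reach (del_verts ?Q {v}) z x" by (rule reach_trans)
      then show ?thesis using x True by blast
    qed
  qed
qed

lemma ear_of_B2_B3_plus_edge:
  assumes x: "x \<in> V1" "x \<noteq> a2" and u: "u \<in> V3" "u \<noteq> a3"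
  shows "ear_of (verts (union_graph B2 B3) \<union> {x}, edges (union_graph B2 B3) \<union> {{x, u}}) V1"
  unfolding ear_of_def
proof (intro allI ballI)
  let ?Q = "(verts (union_graph B2 B3) \<union> {x}, edges (union_graph B2 B3) \<union> {{x, u}})"
  have ua2: "u \<noteq> a2" and xn: "x \<notin> V2" "x \<notin> V3" "x \<noteq> a3"
    using x u V1_Int_V2 V1_Int_V3 cuts_not_mem by auto
  have s2: "V2 \<subseteq> verts ?Q" "edges B2 \<subseteq> edges ?Q" and s3: "V3 \<subseteq> verts ?Q" "edges B3 \<subseteq> edges ?Q"
    by auto
  fix v z assume z: "z \<in> verts ?Q - {v}"
  have via_u: "\<exists>a\<in>V1 - {v}. reach (del_verts ?Q {v}) z a"
    if "reach (del_verts ?Q {v}) z u" "v \<noteq> x" "v \<noteq> u"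
  proof -
    have "reach (del_verts ?Q {v}) u x" using that u by (intro reach_del_verts_edge) auto
    with that(1) have "reach (del_verts ?Q {v}) z x" by (rule reach_trans)
    then show ?thesis using x that by blast
  qed
  show "\<exists>a\<in>V1 - {v}. reach (del_verts ?Q {v}) z a"
  proof (cases "z = x")
    case True
    then have "reach (del_verts ?Q {v}) x x" using z by (intro reach_refl) auto
    then show ?thesis using x z True by blast
  next
    case zx: False
    show ?thesis
    proof (cases "z \<in> V2")
      case zV2: True
      show ?thesis
      proof (cases "v = a2")
        case False
        have "reach (del_verts ?Q {v}) z a2" using B2_reach_del[OF s2, of z v a2] zV2 z False cuts_mem by auto
        then show ?thesis using cuts_mem False by blast
      next
        case True
        have "reach (del_verts ?Q {v}) z a3" using B2_reach_del[OF s2, of z v a3] zV2 z True cuts_mem cuts_neq by auto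
        moreover have "reach (del_verts ?Q {v}) a3 u" using B3_reach_del[OF s3, of a3 v u] True u ua2 cuts_mem cuts_neq by auto
        ultimately have "reach (del_verts ?Q {v}) z u" by (rule reach_trans)
        then show ?thesis using True x ua2 by (intro via_u) auto
      qed
    next
      case False
      then have zV3: "z \<in> V3" using z zx by auto
      show ?thesis
      proof (cases "v = a2 \<or> v = a3")
        case True
        have "reach (del_verts ?Q {v}) z u" using B3_reach_del[OF s3, of z v u] zV3 z True u ua2 by auto
        then show ?thesis using True xn u ua2 x(2) by (intro via_u) auto
      next
        case False
        have "reach (del_verts ?Q {v}) z a3" using B3_reach_del[OF s3, of z v a3] zV3 z False cuts_mem by auto
        moreover have "reach (del_verts ?Q {v}) a3 a2" using B2_reach_del[OF s2, of a3 v a2] False cuts_mem by auto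
        ultimately have "reach (del_verts ?Q {v}) z a2" by (rule reach_trans)
        then show ?thesis using cuts_mem False by blast
      qed
    qed
  qed
qed

lemma no_edge_V1_V2:
  assumes x: "x \<in> V1" "x \<noteq> a2" and u: "u \<in> V2" "u \<noteq> a2" and e: "{x, u} \<in> edges G"
  shows False
proof -
  have xu: "x \<noteq> u" using V1_Int_V2 x u by blast
  have QC: "V2 \<union> {x} \<subseteq> verts C" "edges B2 \<union> {{x, u}} \<subseteq> edges C"
    using block_verts block_edges e x u by auto
  show False
    by (rule block_no_ear[OF blocks(1,2) blocks_neq(1) wf_graph_add_edge[OF wf_blocks(2) xu u(1)] _ _ _ _
          cuts_neq(1) cuts_mem(1,2) ear_of_B2_plus_edge[OF x u]]) (use QC in auto)
qed

lemma no_edge_V1_V3: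
  assumes x: "x \<in> V1" "x \<noteq> a2" and u: "u \<in> V3" "u \<noteq> a3" and e: "{x, u} \<in> edges G"
  shows False
proof -
  have xu: "x \<noteq> u" using V1_Int_V3 x u by blast
  have wfQ: "wf_graph (verts (union_graph B2 B3) \<union> {x}, edges (union_graph B2 B3) \<union> {{x, u}})"
    using wf_graph_add_edge[OF wf_graph_union[OF wf_blocks(2,3)] xu] u by simp
  have QC: "V2 \<union> V3 \<union> {x} \<subseteq> verts C" "edges B2 \<union> edges B3 \<union> {{x, u}} \<subseteq> edges C"
    using block_verts block_edges e x u by auto
  show False
    by (rule block_no_ear[OF blocks(1,2) blocks_neq(1) wfQ _ _ _ _
          cuts_neq(1) cuts_mem(1,2) ear_of_B2_B3_plus_edge[OF x u]]) (use QC in auto)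
qed

lemma edge_from_U: assumes "{x, y} \<in> edges G" "x \<in> U" shows "y \<in> U \<union> {a1, a4}"
proof (rule ccontr)
  assume "y \<notin> U \<union> {a1, a4}"
  moreover have "y \<in> V" using wf_graph_edge[OF wf_G assms(1)] by blast
  ultimately have "y \<in> nbhd G U" using assms unfolding nbhd_def by blast
  then show False using nbhd_chain \<open>y \<notin> U \<union> {a1, a4}\<close> unfolding U_def by blast
qed

lemma edge_inside_or_outside_U:
  assumes e: "e \<in> edges G"
  shows "e \<subseteq> U \<union> {a1, a4} \<or> e \<inter> U = {}"
proof -
  obtain x y where xy: "e = {x, y}" using wf_graphD[OF wf_G e] by blast
  then show ?thesis using edge_from_U[of x y] edge_from_U[of y x] e by (auto simp: insert_commute)
qed

lemma nbhd_U23: "nbhd G U23 = {a2, a4}"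
proof
  show "nbhd G U23 \<subseteq> {a2, a4}"
  proof
    fix x assume "x \<in> nbhd G U23"
    then obtain u where u: "u \<in> U23" "{u, x} \<in> edges G" "x \<notin> U23" by (auto simp: nbhd_def)
    then have "x \<in> U \<union> {a1, a4}" using edge_from_U U23_props by blast
    show "x \<in> {a2, a4}"
    proof (rule ccontr)
      assume "x \<notin> {a2, a4}"
      then have x: "x \<in> V1" "x \<noteq> a2" using \<open>x \<in> U \<union> {a1, a4}\<close> u(3) cuts_mem unfolding U_def U23_def by auto
      have e: "{x, u} \<in> edges G" using u(2) by (simp add: insert_commute)
      from u(1) consider "u \<in> V2" "u \<noteq> a2" | "u \<in> V3" "u \<noteq> a3" using cuts_mem by (auto simp: U23_def)
      then show False using no_edge_V1_V2[OF x _ _ e] no_edge_V1_V3[OF x _ _ e] by cases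
    qed
  qed
next
  obtain y where y: "{a2, y} \<in> edges B2" "y \<noteq> a2" "y \<in> V2"
    using reach_first_edge[OF wf_blocks(2) connected_graphD[of B2 a2 a3]] biconnected_blocks(2)
      cuts_mem cuts_neq(4) by (auto simp: biconnected_def)
  obtain y' where y': "{a4, y'} \<in> edges B3" "y' \<noteq> a4" "y' \<in> V3"
    using reach_first_edge[OF wf_blocks(3) connected_graphD[of B3 a4 a3]] biconnected_blocks(3)
      cuts_mem cuts_neq(6) by (auto simp: biconnected_def)
  have "y \<in> U23" "y' \<in> U23" using y y' cuts_not_mem by (auto simp: U23_def)
  moreover have "{y, a2} \<in> edges G" "{y', a4} \<in> edges G"
    using y y' block_edges by (auto simp: insert_commute)
  ultimately show "{a2, a4} \<subseteq> nbhd G U23" using U23_props cuts_in_V unfolding nbhd_def by blast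
qed

lemma connected_U23: "connected_graph (induced G U23)"
proof (rule connected_graphI[of a3])
  show "a3 \<in> verts (induced G U23)" using U23_props cuts_in_V by auto
next
  fix z assume "z \<in> verts (induced G U23)"
  then have z: "z \<in> U23" by simp
  have s2: "verts (del_verts B2 {a2}) \<subseteq> verts (induced G U23)"
    "edges (del_verts B2 {a2}) \<subseteq> edges (induced G U23)"
    using block_verts block_edges cuts_not_mem unfolding U23_def by auto
  have s3: "verts (del_verts B3 {a4}) \<subseteq> verts (induced G U23)"
    "edges (del_verts B3 {a4}) \<subseteq> edges (induced G U23)"
    using block_verts block_edges cuts_not_mem unfolding U23_def by auto
  show "reach (induced G U23) z a3"
  proof (cases "z \<in> V2")
    case True
    then have "reach (del_verts B2 {a2}) z a3" using B2_reach_del[OF order_refl order_refl] z cuts_mem cuts_neq by (auto simp: U23_def)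
    then show ?thesis by (rule reach_mono[OF s2(2) s2(1)])
  next
    case False
    then have "reach (del_verts B3 {a4}) z a3" using B3_reach_del[OF order_refl order_refl] z cuts_mem cuts_neq by (auto simp: U23_def)
    then show ?thesis by (rule reach_mono[OF s3(2) s3(1)])
  qed
qed

lemma torso_U23_eq: "torso_nbhd G U23 = (V \<inter> (U23 \<union> {a2, a4}),
   {e \<in> edges G. e \<subseteq> U23 \<union> {a2, a4}} \<union> {{a2, a4}})"
  unfolding torso_nbhd_def Let_def nbhd_U23 using cuts_neq(5) by auto

lemma wf_torso_U23: "wf_graph (torso_nbhd G U23)"
proof -
  have "wf_graph ({a2, a4}, {{a2, a4}})" using cuts_neq(5) by (auto simp: wf_graph_def)
  then have "wf_graph (union_graph (induced G (U23 \<union> {a2, a4})) ({a2, a4}, {{a2, a4}}))"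
    by (intro wf_graph_union wf_graph_induced wf_G)
  moreover have "union_graph (induced G (U23 \<union> {a2, a4})) ({a2, a4}, {{a2, a4}}) = torso_nbhd G U23"
    using cuts_in_V by (auto simp: torso_U23_eq union_graph_def induced_def verts_def edges_def)
  ultimately show ?thesis by simp
qed

text \<open>This is where non-triviality of the instance enters.\<close>
lemma torso_U23_not_tw_le_2: "\<not> has_tw_le (torso_nbhd G U23) 2"
proof
  assume "has_tw_le (torso_nbhd G U23) 2"
  then have tw: "tw (torso_nbhd G U23) \<le> 2" using tw_le_iff[OF wf_torso_U23] by blast
  have "subgraph (induced G U23) G" using wf_graph_induced[OF wf_G] by (auto simp: subgraph_def)
  moreover have "verts (induced G U23) = U23" using U_props by auto
  ultimately have "trivial_instance G t" unfolding trivial_instance_def using connected_U23 tw by metis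
  then show False using nontrivial by simp
qed

lemma wf_G': "wf_graph G'"
  using wf_graph_contract_into[OF wf_G cuts_mem(1)] .

lemma solution_contract_meeting_V1:
  assumes S: "S \<subseteq> V" "card S \<le> t" "has_tw_le (del_verts G S) 2" and meet: "S \<inter> V1 \<noteq> {}"
  shows "is_solution G' t (insert a1 (S - V1))"
proof (rule is_solutionI[OF wf_G'])
  let ?S' = "insert a1 (S - V1)"
  have "finite S" using S(1) finite_V finite_subset by blast
  then show "card ?S' \<le> t" using card_insert_Diff_le[of S a1 V1] meet S(2) by simp
  show "?S' \<subseteq> verts G'" using S(1) by auto
  show "has_tw_le (del_verts G' ?S') 2"
  proof (rule has_tw_le_subgraph[OF _ wf_graph_del_verts[OF wf_G'] _ _ S(3)])
    show "edges (del_verts G' ?S') \<subseteq> edges (del_verts G S)" by auto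
  qed (use finite_V in auto)
qed

lemma solution_contract_avoiding_V1:
  assumes S: "S \<subseteq> V" "card S \<le> t" "has_tw_le (del_verts G S) 2" and avoid: "S \<inter> V1 = {}"
  shows "is_solution G' t S"
proof (rule is_solutionI[OF wf_G' _ S(2)])
  show "S \<subseteq> verts G'" using S(1) avoid by auto
  have conV1: "connected_graph (induced (del_verts G S) V1)"
  proof (rule connected_graphI[of a1])
    show "a1 \<in> verts (induced (del_verts G S) V1)" using cuts_mem avoid cuts_in_V by auto
  next
    fix z assume "z \<in> verts (induced (del_verts G S) V1)"
    then have "reach B1 z a1"
      using biconnected_blocks(1) cuts_mem by (intro connected_graphD) (auto simp: biconnected_def)
    then show "reach (induced (del_verts G S) V1) z a1"
      by (rule reach_mono[rotated 2])
        (use wf_graph_edge_subset[OF wf_blocks(1)] block_verts block_edges avoid in fastforce)+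
  qed
  have contr: "has_tw_le (contract_into (del_verts G S) V1 a1) 2"
    by (rule has_tw_le_contract_into[OF _ _ conV1 _ S(3)]) (use finite_V block_verts avoid cuts_mem in auto)
  show "has_tw_le (del_verts G' S) 2"
  proof (rule has_tw_le_subgraph[OF _ wf_graph_del_verts[OF wf_G'] _ _ contr])
    show "edges (del_verts G' S) \<subseteq> edges (contract_into (del_verts G S) V1 a1)"
    proof
      fix e assume e: "e \<in> edges (del_verts G' S)"
      then have esub: "e \<subseteq> verts G' - S" by simp
      from e consider "e \<in> edges G" "e \<inter> V1 = {}" | w where "e = {a1, w}" "w \<in> nbhd G V1" by auto
      then show "e \<in> edges (contract_into (del_verts G S) V1 a1)"
      proof cases
        case 1 then show ?thesis using esub wf_graph_edge_subset[OF wf_G 1(1)] by auto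
      next
        case 2
        then have "w \<in> nbhd (del_verts G S) V1"
          using esub avoid block_verts unfolding nbhd_def by auto
        then show ?thesis using 2 by auto
      qed
    qed
  qed (use finite_V in auto)
qed

lemma solution_contract:
  assumes "is_solution G t S" shows "\<exists>S'. is_solution G' t S'"
proof -
  have S: "S \<subseteq> V" "card S \<le> t" "has_tw_le (del_verts G S) 2"
    using assms tw_le_iff[OF wf_graph_del_verts[OF wf_G]] by (auto simp: is_solution_def)
  show ?thesis
    using solution_contract_meeting_V1[OF S] solution_contract_avoiding_V1[OF S] by blast
qed

lemma has_tw_le_inside_K:
  assumes "W \<subseteq> K" shows "has_tw_le (induced G W) 2"
proof (rule has_tw_le_subgraph[OF _ wf_graph_induced[OF wf_G]])
  show "has_tw_le (del_verts G X) 2"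
    using modulator_X tw_le_iff[OF wf_graph_del_verts[OF wf_G]] by (simp add: modulator_def)
qed (use assms K_subset finite_V in auto)

lemma outside_U_subgraph:
  "verts (induced G (V - U - S')) \<subseteq> verts (del_verts G' S')"
  "edges (induced G (V - U - S')) \<subseteq> edges (del_verts G' S')"
proof -
  have out: "x \<notin> V1 \<or> x = a1" if "x \<in> V - U" for x
    using that U_props(1) a4_not_in_V1 by blast
  then show "verts (induced G (V - U - S')) \<subseteq> verts (del_verts G' S')" by auto
  show "edges (induced G (V - U - S')) \<subseteq> edges (del_verts G' S')"
  proof
    fix e assume "e \<in> edges (induced G (V - U - S'))"
    then have e: "e \<in> edges G" "e \<subseteq> V - U - S'" by auto
    have "e \<in> edges G'"
    proof (cases "e \<inter> V1 = {}")
      case True then show ?thesis using e by simp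
    next
      case False
      then have "a1 \<in> e" using e out by blast
      then obtain w where w: "e = {a1, w}" "w \<noteq> a1" using wf_graphD[OF wf_G e(1)] by auto
      then have "w \<in> nbhd G V1" using e out cuts_mem unfolding nbhd_def by auto
      then show ?thesis using w by auto
    qed
    then show "e \<in> edges (del_verts G' S')" using e out by auto
  qed
qed

lemma has_tw_le_outside_U:
  assumes sol: "has_tw_le (del_verts G' S') 2" and wfH: "wf_graph H"
    and sv: "verts H \<subseteq> V - U - S'" and se: "edges H \<subseteq> edges (induced G (V - U - S'))"
  shows "has_tw_le H 2"
proof (rule has_tw_le_subgraph[OF _ wfH _ _ sol])
  show "verts H \<subseteq> verts (del_verts G' S')" using sv outside_U_subgraph(1)[of S'] by auto
  show "edges H \<subseteq> edges (del_verts G' S')" using se outside_U_subgraph(2)[of S'] by blast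
qed (use finite_V in simp)

text \<open>If \<open>S\<close> contains one of the two attachment vertices, then \<open>G - S\<close> is glued from a part
  of \<open>G' - S'\<close> and a part of the component \<open>K\<close> along the other one.\<close>
lemma has_tw_le_del_attachment:
  assumes sol: "has_tw_le (del_verts G' S') 2"
    and c: "c \<in> {a1, a4}" "c \<in> S" and SS: "S' - U \<subseteq> S"
  shows "has_tw_le (del_verts G S) 2"
proof -
  define c' where "c' = (if c = a1 then a4 else a1)"
  have cc: "{c, c'} = {a1, a4}" using c cuts_neq by (auto simp: c'_def)
  let ?G1 = "induced G (V - U - S)" and ?G2 = "induced G ((U \<union> {c'}) - S)"
  have h1: "has_tw_le ?G1 2" using SS by (intro has_tw_le_outside_U[OF sol wf_graph_induced[OF wf_G]]) auto
  have h2: "has_tw_le ?G2 2" using U_props c by (intro has_tw_le_inside_K) (auto simp: c'_def)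
  show ?thesis
  proof (rule has_tw_le_subgraph_union[OF h1 h2 _ _ _ wf_graph_del_verts[OF wf_G]])
    show "edges (del_verts G S) \<subseteq> edges ?G1 \<union> edges ?G2"
    proof
      fix e assume "e \<in> edges (del_verts G S)"
      then have e: "e \<in> edges G" "e \<subseteq> V - S" by auto
      from edge_inside_or_outside_U[OF e(1)] show "e \<in> edges ?G1 \<union> edges ?G2"
      proof
        assume "e \<subseteq> U \<union> {a1, a4}"
        then have "e \<subseteq> U \<union> {c, c'}" using cc by simp
        then have "e \<subseteq> (U \<union> {c'}) - S" using e(2) c(2) by blast
        then show ?thesis using e by simp
      next
        assume "e \<inter> U = {}"
        then show ?thesis using e by auto
      qed
    qed
    show "verts ?G1 \<inter> verts ?G2 \<subseteq> {c'}" by auto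
    show "finite (verts ?G1)" "finite (verts ?G2)" using finite_V by auto
    show "verts (del_verts G S) \<subseteq> verts ?G1 \<union> verts ?G2" by auto
  qed
qed

text \<open>\<open>G - S'\<close> is glued from \<open>G[U \<union> {a1, a4}]\<close>, the \<open>a1\<close>-side outside \<open>U\<close> and the rest, at \<open>a1\<close>
  and at \<open>a4\<close>.\<close>
lemma has_tw_le_separated:
  assumes sol: "has_tw_le (del_verts G' S') 2"
    and dis: "S' \<inter> (U \<union> {a1, a4}) = {}"
    and nr: "\<not> reach (induced G (V - U - S')) a1 a4"
  shows "has_tw_le (del_verts G S') 2"
proof -
  let ?R = "induced G (V - U - S')"
  define Ca where "Ca = {v. reach ?R a1 v}"
  let ?Q = "induced G (U \<union> {a1, a4})"
  let ?Ra = "induced ?R Ca" and ?Rb = "induced ?R (verts ?R - Ca)"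
  have a1R: "a1 \<in> verts ?R" using cuts_in_V dis by (auto simp: U_def)
  have a1Ca: "a1 \<in> Ca" unfolding Ca_def using a1R by (simp add: reach_refl)
  have a4Ca: "a4 \<notin> Ca" unfolding Ca_def using nr by simp
  have CaR: "Ca \<subseteq> verts ?R" unfolding Ca_def using reach_verts by fastforce
  have closed: "y \<in> Ca" if "x \<in> Ca" "{x, y} \<in> edges ?R" "y \<in> verts ?R" for x y
  proof -
    have "reach ?R a1 x" using that(1) by (simp add: Ca_def)
    moreover have "reach ?R x y" using that reach_verts[OF calculation] by (intro reach_edge) auto
    ultimately show ?thesis unfolding Ca_def using reach_trans by fastforce
  qed
  have h1: "has_tw_le (union_graph ?Q ?Ra) 2"
  proof (rule has_tw_le_union[of _ _ _ a1])
    show "has_tw_le ?Q 2" using U_props by (intro has_tw_le_inside_K) auto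
    show "has_tw_le ?Ra 2" by (rule has_tw_le_outside_U[OF sol wf_graph_induced]) (auto simp: wf_graph_induced[OF wf_G])
    show "verts ?Q \<inter> verts ?Ra \<subseteq> {a1}" using CaR a4Ca by auto
  qed
  have h2: "has_tw_le ?Rb 2"
    by (rule has_tw_le_outside_U[OF sol wf_graph_induced]) (auto simp: wf_graph_induced[OF wf_G])
  show ?thesis
  proof (rule has_tw_le_subgraph_union[OF h1 h2 _ _ _ wf_graph_del_verts[OF wf_G], of a4])
    show "verts (union_graph ?Q ?Ra) \<inter> verts ?Rb \<subseteq> {a4}" using CaR a1Ca by auto
    show "verts (del_verts G S') \<subseteq> verts (union_graph ?Q ?Ra) \<union> verts ?Rb" using dis by auto
    show "edges (del_verts G S') \<subseteq> edges (union_graph ?Q ?Ra) \<union> edges ?Rb"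
    proof
      fix e assume "e \<in> edges (del_verts G S')"
      then have e: "e \<in> edges G" "e \<subseteq> V - S'" by auto
      from edge_inside_or_outside_U[OF e(1)] show "e \<in> edges (union_graph ?Q ?Ra) \<union> edges ?Rb"
      proof
        assume eU: "e \<inter> U = {}"
        then have eR: "e \<in> edges ?R" using e by auto
        obtain x y where xy: "e = {x, y}" using wf_graphD[OF wf_G e(1)] by blast
        have xyR: "x \<in> verts ?R" "y \<in> verts ?R" using e eU xy by auto
        have "x \<in> Ca \<longleftrightarrow> y \<in> Ca" using closed[of x y] closed[of y x] eR xy xyR by (auto simp: insert_commute)
        then have "e \<subseteq> Ca \<or> e \<subseteq> verts ?R - Ca" using xy xyR by auto
        then show ?thesis using eR by auto
      qed (use e in simp)
    qed
  qed (use finite_V in auto)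
qed

text \<open>Contracting the \<open>a1\<close>-side \<open>P\<close> of a path from \<open>a1\<close> to \<open>a4\<close> into the deleted vertex
  \<open>a2\<close> turns \<open>G' - S'\<close> into a supergraph of the torso of \<open>U23\<close>: \<open>a1 \<in> P\<close> is adjacent in \<open>G'\<close>
  to every neighbour of \<open>a2\<close>, and the path supplies the torso edge \<open>{a2, a4}\<close>.\<close>
lemma torso_U23_subgraph_contract:
  assumes dis: "S' \<inter> (U \<union> {a1, a4}) = {}" and P: "P \<subseteq> V - U - S' - {a4}" "a1 \<in> P"
    and w: "w \<in> P" "{w, a4} \<in> edges G"
  shows "verts (torso_nbhd G U23) \<subseteq> verts (contract_into (del_verts G' S') P a2)"
    and "edges (torso_nbhd G U23) \<subseteq> edges (contract_into (del_verts G' S') P a2)"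
proof -
  let ?H = "del_verts G' S'"
  have inH: "y \<in> verts ?H - P" if "y \<in> U23 \<union> {a4}" for y
  proof -
    have "y \<in> V" "y \<notin> V1" using that U_props(6) U23_props(2) cuts_in_V a4_not_in_V1 by auto
    moreover have "y \<notin> S'" "y \<notin> P" using that dis U23_props(1) P(1) by auto
    ultimately show ?thesis by simp
  qed
  then show "verts (torso_nbhd G U23) \<subseteq> verts (contract_into ?H P a2)"
    unfolding torso_U23_eq by auto
  have nbP: "y \<in> nbhd ?H P" if "y \<in> U23 \<union> {a4}" "{x, y} \<in> edges ?H" "x \<in> P" for x y
    using inH[OF that(1)] that(2,3) unfolding nbhd_def by blast
  have a4: "a4 \<in> nbhd ?H P"
  proof (rule nbP[OF _ _ w(1)])
    have "a4 \<notin> U" "a4 \<notin> S'" "a4 \<in> V" using dis cuts_in_V by (auto simp: U_def)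
    then have "{w, a4} \<in> edges (induced G (V - U - S'))" using w P by auto
    then show "{w, a4} \<in> edges ?H" using outside_U_subgraph(2) by blast
  qed simp
  have a2_nb: "y \<in> nbhd ?H P" if "y \<in> U23 \<union> {a4}" "{a2, y} \<in> edges G" for y
  proof (rule nbP[OF that(1) _ P(2)])
    have "y \<in> V" "y \<notin> V1" using that(1) U_props(6) U23_props(2) cuts_in_V a4_not_in_V1 by auto
    then have "y \<in> nbhd G V1" using that(2) cuts_mem unfolding nbhd_def by blast
    then have "{a1, y} \<in> edges G'" by auto
    moreover have "{a1, y} \<subseteq> verts G' - S'" using inH[OF that(1)] dis by auto
    ultimately show "{a1, y} \<in> edges ?H" by simp
  qed
  show "edges (torso_nbhd G U23) \<subseteq> edges (contract_into ?H P a2)"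
  proof
    fix e assume "e \<in> edges (torso_nbhd G U23)"
    then consider "e = {a2, a4}" | "e \<in> edges G" "e \<subseteq> U23 \<union> {a2, a4}"
      unfolding torso_U23_eq by auto
    then show "e \<in> edges (contract_into ?H P a2)"
    proof cases
      case 1 then show ?thesis using a4 by auto
    next
      case 2
      show ?thesis
      proof (cases "a2 \<in> e")
        case False
        then have eU: "e \<subseteq> U23 \<union> {a4}" using 2 by auto
        then have "e \<inter> V1 = {}" using U23_props(2) a4_not_in_V1 by auto
        then have "e \<in> edges G'" using 2 by auto
        moreover have "e \<subseteq> verts G' - S'" "e \<inter> P = {}" using eU inH by auto
        ultimately show ?thesis by auto
      next
        case True
        obtain y where y: "e = {a2, y}" using wf_graphD[OF wf_G 2(1)] True by auto
        then have "y \<noteq> a2" using wf_graph_edge[OF wf_G] 2(1) by blast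
        then have "y \<in> U23 \<union> {a4}" using 2 y by auto
        then show ?thesis using a2_nb 2 y by auto
      qed
    qed
  qed
qed

lemma separated_outside_U:
  assumes sol: "has_tw_le (del_verts G' S') 2" and dis: "S' \<inter> (U \<union> {a1, a4}) = {}"
  shows "\<not> reach (induced G (V - U - S')) a1 a4"
proof
  let ?R = "induced G (V - U - S')" and ?H = "del_verts G' S'"
  assume "reach ?R a1 a4"
  then obtain w where w: "reach (del_verts ?R {a4}) a1 w" "{w, a4} \<in> edges ?R"
    using reach_last_edge[OF wf_graph_induced[OF wf_G] _ cuts_neq(3)] by blast
  define P where "P = {v. reach (del_verts ?R {a4}) a1 v}"
  have R4H: "verts (del_verts ?R {a4}) \<subseteq> verts ?H" "edges (del_verts ?R {a4}) \<subseteq> edges ?H"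
    using outside_U_subgraph[of S'] by auto
  have PR: "P \<subseteq> V - U - S' - {a4}" unfolding P_def using reach_verts by fastforce
  have "reach (del_verts ?R {a4}) a1 a1" using reach_verts[OF w(1)] by (intro reach_refl) blast
  then have a1P: "a1 \<in> P" by (simp add: P_def)
  have conP: "connected_graph (induced ?H P)"
  proof (rule connected_graphI[of a1])
    show "a1 \<in> verts (induced ?H P)" using a1P PR R4H by auto
  next
    fix z assume "z \<in> verts (induced ?H P)"
    then have "reach (del_verts ?R {a4}) a1 z" by (simp add: P_def)
    then have "reach (induced ?H P) a1 z" unfolding P_def
      by (rule reach_induced_reach_set[OF wf_graph_del_verts[OF wf_graph_induced[OF wf_G]] R4H(2,1)])
    then show "reach (induced ?H P) z a1" by (rule reach_sym)
  qed
  have "has_tw_le (contract_into ?H P a2) 2"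
    by (rule has_tw_le_contract_into[OF _ _ conP _ sol]) (use finite_V PR U_props(1) cuts_mem cuts_neq in auto)
  then have "has_tw_le (torso_nbhd G U23) 2"
    using torso_U23_subgraph_contract[OF dis PR a1P _ _] w
    by (intro has_tw_le_subgraph[OF _ wf_torso_U23]) (auto simp: P_def finite_V)
  then show False using torso_U23_not_tw_le_2 by simp
qed

lemma solution_uncontract:
  assumes "is_solution G' t S'" shows "\<exists>S. is_solution G t S"
proof -
  have S'V: "S' \<subseteq> V" and card_S': "card S' \<le> t" and sol: "has_tw_le (del_verts G' S') 2"
    using assms tw_le_iff[OF wf_graph_del_verts[OF wf_G']] cuts_in_V by (auto simp: is_solution_def)
  have "finite S'" using S'V finite_V finite_subset by blast
  show ?thesis
  proof (cases "S' \<inter> (U \<union> {a1}) = {}")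
    case False
    define S where "S = insert a1 (S' - U)"
    have "card S \<le> card S'"
      unfolding S_def using card_insert_Diff_le[OF \<open>finite S'\<close>, of a1 U] False by blast
    moreover have "has_tw_le (del_verts G S) 2"
      by (rule has_tw_le_del_attachment[OF sol, of a1]) (auto simp: S_def)
    moreover have "S \<subseteq> V" using S'V cuts_in_V by (auto simp: S_def)
    ultimately have "is_solution G t S" using card_S' by (intro is_solutionI[OF wf_G]) auto
    then show ?thesis by blast
  next
    case True
    have "has_tw_le (del_verts G S') 2"
    proof (cases "a4 \<in> S'")
      case True
      then show ?thesis by (rule has_tw_le_del_attachment[OF sol, rotated]) auto
    next
      case False
      then have dis: "S' \<inter> (U \<union> {a1, a4}) = {}" using True by auto
      then show ?thesis using has_tw_le_separated[OF sol dis] separated_outside_U[OF sol dis] by blast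
    qed
    then show ?thesis using is_solutionI[OF wf_G S'V card_S'] by blast
  qed
qed

end

theorem mainTheorem17:
  fixes G :: "'a graph" and t :: nat and X :: "'a set" and K :: "'a set"
    and a1 a2 a3 a4 :: 'a and B1 B2 B3 :: "'a graph"
  assumes "wf_graph G"
    and "\<not> trivial_instance G t"
    and "modulator G X"
    and "K \<in> components (del_verts G X)"
    and "bc_adj (induced G K) a1 B1" and "bc_adj (induced G K) a2 B1"
    and "bc_adj (induced G K) a2 B2" and "bc_adj (induced G K) a3 B2"
    and "bc_adj (induced G K) a3 B3" and "bc_adj (induced G K) a4 B3"
    and "distinct [a1, a2, a3, a4]" and "distinct [B1, B2, B3]"
    and "nbhd G ((verts B1 \<union> verts B2 \<union> verts B3) - {a1, a4}) = {a1, a4}"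
  shows "(\<exists>S. is_solution G t S) \<longleftrightarrow> (\<exists>S. is_solution (contract_into G (verts B1) a1) t S)"
proof -
  interpret block_chain G t X K a1 a2 a3 a4 B1 B2 B3
    using assms by unfold_locales
  show ?thesis using solution_contract solution_uncontract by blast
qed

end
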